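(* Consider the augmenting-path algorithm for online generalized network flow with resulting flows $x^{(0)},x^{(1)},\dots,x^{(T)}$. Let $t\in[T]$ and let $v$ be a vertex of the graph at time $t-1$. Then $\mathrm{height}_t(v)\ge\mathrm{height}_{t-1}(v)$.
   Context: Generalized network flow instance: digraph $G=(V,E)$ without anti-parallel edges, sources with no incoming edges, sink $\tau$ with no outgoing edges, edge capacities $\mu_e>0$, costs $c_e>0$, gains $\gamma_e>0$; convention: every vertex $v\ne\tau$ has a dummy edge $v\tau$ of infinite capacity, gain $1$ and sufficiently large cost $B$. Online generalized network flow: sources $s_1,\dots,s_T$ (each with supply $1$) arrive one at a time with their outgoing edges. Residual graph $G^x$ for $x$ with $0\le x_e\le\mu_e$: forward edge $uv$ (capacity $\mu_{uv}-x_{uv}$, cost $c_{uv}$, gain $\gamma_{uv}$) if $x_{uv}<\mu_{uv}$; backward edge $vu$ (capacity $\gamma_{uv}x_{uv}$, cost $0$, gain $1/\gamma_{uv}$) if $x_{uv}>0$. A fractional augmenting path from $s\neq\tau$ in $G^x$ is $f\ge0$ on the residual edges with out-minus-gain-weighted-in flow equal to $1$ at $s$ and $0$ at every vertex other than $s,\tau$; cost $\sum_e c^x_ef_e$. It is an augmenting path if its support is a path from $s$ to $\tau$, or a cycle through $s$ avoiding $\tau$, or a cycle avoiding $s,\tau$ together with a path from $s$ to the cycle internally disjoint from it. Augmenting $x$ by $\theta$ units using $f$: for each forward residual edge $uv$ set $x_{uv}\gets x_{uv}+\theta f_{uv}$, and for each backward residual edge $vu$ set $x_{uv}\gets x_{uv}-\theta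 f_{vu}/\gamma_{uv}$. The algorithm: $x^{(0)}=0$; at time $t$, add $s_t$ and its edges, set $x\gets x^{(t-1)}$ (zero on new edges), and while $\sum_{e\in\delta^+(s_t)}x_e<1$, find a cheapest augmenting path $f$ from $s_t$ in $G^x$, let $\theta>0$ be the largest value such that augmenting by $\theta$ using $f$ keeps $x_e\in[0,\mu_e]$ for all $e$ and $\sum_{e\in\delta^+(s_t)}x_e\le1$, and augment; finally $x^{(t)}\gets x$. For a vertex $v\ne\tau$ present at time $t$, $\mathrm{height}_t(v)$ is the minimum cost of an augmenting path from $v$ in $G^{x^{(t)}}$; $\mathrm{height}_t(\tau)=0$. *)

theory Defs
  imports Complex_Main
begin

text \<open>Real edges are pairs
  of vertices; the dummy edge v\<rightarrow>sink of every vertex v is represented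
  separately (Inr v), with infinite capacity, gain 1 and cost B.\<close>

record 'v gnet =
  verts  :: "'v set"
  redges :: "('v \<times> 'v) set"
  sink   :: 'v
  cap    :: "'v \<times> 'v \<Rightarrow> real"
  ecost  :: "'v \<times> 'v \<Rightarrow> real"
  egain  :: "'v \<times> 'v \<Rightarrow> real"

type_synonym 'v edge = "('v \<times> 'v) + 'v"
type_synonym 'v redge = "'v edge \<times> bool"  \<comment> \<open>True = forward, False = backward\<close>
type_synonym 'v flow = "'v edge \<Rightarrow> real"

definition tailE :: "'v edge \<Rightarrow> 'v" where
  "tailE e = (case e of Inl a \<Rightarrow> fst a | Inr v \<Rightarrow> v)"

definition headE :: "'v gnet \<Rightarrow> 'v edge \<Rightarrow> 'v" where
  "headE N e = (case e of Inl a \<Rightarrow> snd a | Inr v \<Rightarrow> sink N)"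

definition costE :: "'v gnet \<Rightarrow> real \<Rightarrow> 'v edge \<Rightarrow> real" where
  "costE N B e = (case e of Inl a \<Rightarrow> ecost N a | Inr v \<Rightarrow> B)"

definition gainE :: "'v gnet \<Rightarrow> 'v edge \<Rightarrow> real" where
  "gainE N e = (case e of Inl a \<Rightarrow> egain N a | Inr v \<Rightarrow> 1)"

definition below_cap :: "'v gnet \<Rightarrow> 'v flow \<Rightarrow> 'v edge \<Rightarrow> bool" where
  "below_cap N x e = (case e of Inl a \<Rightarrow> x e < cap N a | Inr v \<Rightarrow> True)"

definition within_cap :: "'v gnet \<Rightarrow> 'v flow \<Rightarrow> 'v edge \<Rightarrow> bool" where
  "within_cap N x e = (case e of Inl a \<Rightarrow> x e \<le> cap N a | Inr v \<Rightarrow> True)"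

definition gnf_instance :: "'v gnet \<Rightarrow> (nat \<Rightarrow> 'v) \<Rightarrow> nat \<Rightarrow> bool" where
  "gnf_instance N s T \<longleftrightarrow>
     finite (verts N) \<and> redges N \<subseteq> verts N \<times> verts N \<and> sink N \<in> verts N \<and>
     (\<forall>(u,w)\<in>redges N. (w,u) \<notin> redges N) \<and>
     (\<forall>(u,w)\<in>redges N. u \<noteq> sink N) \<and>
     (\<forall>e\<in>redges N. cap N e > 0 \<and> ecost N e > 0 \<and> egain N e > 0) \<and>
     inj_on s {1..T} \<and>
     (\<forall>i\<in>{1..T}. s i \<in> verts N \<and> s i \<noteq> sink N \<and> (\<forall>(u,w)\<in>redges N. w \<noteq> s i))"

text \<open>Graph present at time t: all vertices except the sources that have not yet arrived.\<close>
definition verts_at :: "'v gnet \<Rightarrow> (nat \<Rightarrow> 'v) \<Rightarrow> nat \<Rightarrow> nat \<Rightarrow> 'v set" where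
  "verts_at N s T t = verts N - s ` {Suc t..T}"

definition edges_at :: "'v gnet \<Rightarrow> (nat \<Rightarrow> 'v) \<Rightarrow> nat \<Rightarrow> nat \<Rightarrow> 'v edge set" where
  "edges_at N s T t =
     {Inl a | a. a \<in> redges N \<and> fst a \<in> verts_at N s T t} \<union>
     {Inr v | v. v \<in> verts_at N s T t \<and> v \<noteq> sink N}"

definition res_edges :: "'v gnet \<Rightarrow> (nat \<Rightarrow> 'v) \<Rightarrow> nat \<Rightarrow> nat \<Rightarrow> 'v flow \<Rightarrow> 'v redge set" where
  "res_edges N s T t x =
     {(e, True) | e. e \<in> edges_at N s T t \<and> below_cap N x e} \<union>
     {(e, False) | e. e \<in> edges_at N s T t \<and> x e > 0}"

definition rtail :: "'v gnet \<Rightarrow> 'v redge \<Rightarrow> 'v" where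
  "rtail N r = (if snd r then tailE (fst r) else headE N (fst r))"

definition rhead :: "'v gnet \<Rightarrow> 'v redge \<Rightarrow> 'v" where
  "rhead N r = (if snd r then headE N (fst r) else tailE (fst r))"

definition rcost :: "'v gnet \<Rightarrow> real \<Rightarrow> 'v redge \<Rightarrow> real" where
  "rcost N B r = (if snd r then costE N B (fst r) else 0)"

definition rgain :: "'v gnet \<Rightarrow> 'v redge \<Rightarrow> real" where
  "rgain N r = (if snd r then gainE N (fst r) else 1 / gainE N (fst r))"

definition frac_aug_path ::
  "'v gnet \<Rightarrow> (nat \<Rightarrow> 'v) \<Rightarrow> nat \<Rightarrow> nat \<Rightarrow> 'v flow \<Rightarrow> 'v \<Rightarrow> ('v redge \<Rightarrow> real) \<Rightarrow> bool" where
  "frac_aug_path N s T t x a f \<longleftrightarrow>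
     (\<forall>r. 0 \<le> f r) \<and> (\<forall>r. f r \<noteq> 0 \<longrightarrow> r \<in> res_edges N s T t x) \<and>
     (\<forall>w \<in> verts_at N s T t - {sink N}.
        (\<Sum>r\<in>{r \<in> res_edges N s T t x. rtail N r = w}. f r)
        - (\<Sum>r\<in>{r \<in> res_edges N s T t x. rhead N r = w}. rgain N r * f r)
        = (if w = a then 1 else 0))"

definition path_cost ::
  "'v gnet \<Rightarrow> real \<Rightarrow> (nat \<Rightarrow> 'v) \<Rightarrow> nat \<Rightarrow> nat \<Rightarrow> 'v flow \<Rightarrow> ('v redge \<Rightarrow> real) \<Rightarrow> real" where
  "path_cost N B s T t x f = (\<Sum>r\<in>res_edges N s T t x. rcost N B r * f r)"

fun rchain :: "'v gnet \<Rightarrow> 'v redge list \<Rightarrow> bool" where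
  "rchain N [] = True"
| "rchain N [r] = True"
| "rchain N (r1 # r2 # rs) = (rhead N r1 = rtail N r2 \<and> rchain N (r2 # rs))"

definition pverts :: "'v gnet \<Rightarrow> 'v redge list \<Rightarrow> 'v list" where
  "pverts N rs = map (rtail N) rs @ [rhead N (last rs)]"

definition is_rpath :: "'v gnet \<Rightarrow> 'v redge list \<Rightarrow> 'v \<Rightarrow> 'v \<Rightarrow> bool" where
  "is_rpath N rs a b \<longleftrightarrow> rs \<noteq> [] \<and> rchain N rs \<and> rtail N (hd rs) = a \<and>
     rhead N (last rs) = b \<and> distinct (pverts N rs)"

definition is_rcycle :: "'v gnet \<Rightarrow> 'v redge list \<Rightarrow> bool" where
  "is_rcycle N rs \<longleftrightarrow> rs \<noteq> [] \<and> rchain N rs \<and> rhead N (last rs) = rtail N (hd rs) \<and>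
     distinct (map (rtail N) rs)"

definition aug_path ::
  "'v gnet \<Rightarrow> (nat \<Rightarrow> 'v) \<Rightarrow> nat \<Rightarrow> nat \<Rightarrow> 'v flow \<Rightarrow> 'v \<Rightarrow> ('v redge \<Rightarrow> real) \<Rightarrow> bool" where
  "aug_path N s T t x a f \<longleftrightarrow> frac_aug_path N s T t x a f \<and>
     (let S = {r. 0 < f r} in
       (\<exists>P. is_rpath N P a (sink N) \<and> S = set P) \<or>
       (\<exists>C. is_rcycle N C \<and> a \<in> set (map (rtail N) C) \<and> sink N \<notin> set (map (rtail N) C) \<and>
            S = set C) \<or>
       (\<exists>C P w. is_rcycle N C \<and> a \<notin> set (map (rtail N) C) \<and> sink N \<notin> set (map (rtail N) C) \<and>
            w \<in> set (map (rtail N) C) \<and> is_rpath N P a w \<and>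
            set (butlast (pverts N P)) \<inter> set (map (rtail N) C) = {} \<and>
            S = set P \<union> set C))"

definition height ::
  "'v gnet \<Rightarrow> real \<Rightarrow> (nat \<Rightarrow> 'v) \<Rightarrow> nat \<Rightarrow> nat \<Rightarrow> 'v flow \<Rightarrow> 'v \<Rightarrow> real" where
  "height N B s T t x v =
     (if v = sink N then 0
      else Inf (path_cost N B s T t x ` {f. aug_path N s T t x v f}))"

definition cheapest ::
  "'v gnet \<Rightarrow> real \<Rightarrow> (nat \<Rightarrow> 'v) \<Rightarrow> nat \<Rightarrow> nat \<Rightarrow> 'v flow \<Rightarrow> 'v \<Rightarrow> ('v redge \<Rightarrow> real) \<Rightarrow> bool" where
  "cheapest N B s T t x a f \<longleftrightarrow> aug_path N s T t x a f \<and>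
     (\<forall>g. aug_path N s T t x a g \<longrightarrow> path_cost N B s T t x f \<le> path_cost N B s T t x g)"

definition augment :: "'v gnet \<Rightarrow> 'v flow \<Rightarrow> ('v redge \<Rightarrow> real) \<Rightarrow> real \<Rightarrow> 'v flow" where
  "augment N x f \<theta> = (\<lambda>e. x e + \<theta> * f (e, True) - \<theta> * f (e, False) / gainE N e)"

definition outflow :: "'v gnet \<Rightarrow> (nat \<Rightarrow> 'v) \<Rightarrow> nat \<Rightarrow> nat \<Rightarrow> 'v flow \<Rightarrow> 'v \<Rightarrow> real" where
  "outflow N s T t x a = (\<Sum>e\<in>{e \<in> edges_at N s T t. tailE e = a}. x e)"

definition feasible_at :: "'v gnet \<Rightarrow> (nat \<Rightarrow> 'v) \<Rightarrow> nat \<Rightarrow> nat \<Rightarrow> 'v flow \<Rightarrow> bool" where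
  "feasible_at N s T t x \<longleftrightarrow> (\<forall>e\<in>edges_at N s T t. 0 \<le> x e \<and> within_cap N x e)"

definition theta_ok ::
  "'v gnet \<Rightarrow> (nat \<Rightarrow> 'v) \<Rightarrow> nat \<Rightarrow> nat \<Rightarrow> 'v flow \<Rightarrow> ('v redge \<Rightarrow> real) \<Rightarrow> real \<Rightarrow> bool" where
  "theta_ok N s T t x f \<theta> \<longleftrightarrow> feasible_at N s T t (augment N x f \<theta>) \<and>
     outflow N s T t (augment N x f \<theta>) (s t) \<le> 1"

definition alg_step ::
  "'v gnet \<Rightarrow> real \<Rightarrow> (nat \<Rightarrow> 'v) \<Rightarrow> nat \<Rightarrow> nat \<Rightarrow> 'v flow \<Rightarrow> 'v flow \<Rightarrow> bool" where
  "alg_step N B s T t x x' \<longleftrightarrow> outflow N s T t x (s t) < 1 \<and>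
     (\<exists>f \<theta>. cheapest N B s T t x (s t) f \<and> 0 < \<theta> \<and> theta_ok N s T t x f \<theta> \<and>
        (\<forall>\<theta>'. 0 < \<theta>' \<and> theta_ok N s T t x f \<theta>' \<longrightarrow> \<theta>' \<le> \<theta>) \<and>
        x' = augment N x f \<theta>)"

definition alg_phase ::
  "'v gnet \<Rightarrow> real \<Rightarrow> (nat \<Rightarrow> 'v) \<Rightarrow> nat \<Rightarrow> nat \<Rightarrow> 'v flow \<Rightarrow> 'v flow \<Rightarrow> bool" where
  "alg_phase N B s T t x0 x' \<longleftrightarrow> (alg_step N B s T t)\<^sup>*\<^sup>* x0 x' \<and> \<not> outflow N s T t x' (s t) < 1"

definition restrict_flow :: "'v gnet \<Rightarrow> (nat \<Rightarrow> 'v) \<Rightarrow> nat \<Rightarrow> nat \<Rightarrow> 'v flow \<Rightarrow> 'v flow" where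
  "restrict_flow N s T t x = (\<lambda>e. if e \<in> edges_at N s T t then x e else 0)"

definition alg_run :: "'v gnet \<Rightarrow> real \<Rightarrow> (nat \<Rightarrow> 'v) \<Rightarrow> nat \<Rightarrow> (nat \<Rightarrow> 'v flow) \<Rightarrow> bool" where
  "alg_run N B s T xs \<longleftrightarrow> xs 0 = (\<lambda>_. 0) \<and>
     (\<forall>t\<in>{1..T}. alg_phase N B s T t (restrict_flow N s T (t - 1) (xs (t - 1))) (xs t))"

end

theory Submission
  imports Defs
begin

text \<open>Heights are the largest feasible potentials. Call \<pi> feasible for a flow x if
  \<pi> vanishes at the sink and \<pi> (tail r) \<le> c r + \<gamma> r * \<pi> (head r) for every residual
  edge r. Weighting these inequalities with a fractional augmenting path f from a
  telescopes to \<pi> a \<le> cost f, so feasible potentials lie below the heights. Conversely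
  the heights themselves are feasible (a Bellman inequality): an augmenting path from
  the head of a residual edge r extends backwards along r to one from its tail, at
  cost at most c r + \<gamma> r times the old cost.

  Augmenting along a cheapest path f keeps the old heights feasible: by complementary
  slackness every edge in the support of f is tight, hence so is every reverse edge
  that the augmentation creates. When a new source arrives only edges leaving it are
  added, and the old heights extended by 0 at the new source stay feasible. In both
  cases the new heights dominate the old ones.\<close>

section \<open>Lists and walks\<close>

lemma distinct_nth_notin_set_take:
  "distinct xs \<Longrightarrow> i < length xs \<Longrightarrow> xs ! i \<notin> set (take i xs)"
  by (metis distinct_take take_Suc_conv_app_nth distinct_append disjoint_iff list.set_intros(1))

lemma last_take_conv_nth: "0 < n \<Longrightarrow> n \<le> length xs \<Longrightarrow> last (take n xs) = xs ! (n - 1)"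
  by (subst last_conv_nth) auto

lemma notin_set_map_conv_nth: "y \<notin> set (map f xs) \<longleftrightarrow> (\<forall>i<length xs. f (xs ! i) \<noteq> y)"
  unfolding in_set_conv_nth by auto

lemma obtain_first_nth:
  assumes "\<exists>i<length xs. P (xs ! i)"
  obtains i where "i < length xs" "P (xs ! i)" "\<forall>j<i. \<not> P (xs ! j)"
proof -
  define i where "i = (LEAST i. i < length xs \<and> P (xs ! i))"
  have i: "i < length xs" "P (xs ! i)"
    using LeastI_ex[OF assms] unfolding i_def by auto
  moreover have "\<not> P (xs ! j)" if "j < i" for j
    using not_less_Least[of j "\<lambda>i. i < length xs \<and> P (xs ! i)"] that i(1) unfolding i_def by auto
  ultimately show thesis
    using that by blast
qed

lemma rchain_Cons:
  "rchain N (r # rs) \<longleftrightarrow> rchain N rs \<and> (rs \<noteq> [] \<longrightarrow> rhead N r = rtail N (hd rs))"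
  by (cases rs) auto

lemma rchain_append:
  "rchain N (xs @ ys) \<longleftrightarrow> rchain N xs \<and> rchain N ys \<and>
     (xs \<noteq> [] \<and> ys \<noteq> [] \<longrightarrow> rhead N (last xs) = rtail N (hd ys))"
  by (induction xs) (auto simp: rchain_Cons)

lemma rchain_conv_nth:
  "rchain N L \<longleftrightarrow> (\<forall>i. Suc i < length L \<longrightarrow> rhead N (L ! i) = rtail N (L ! Suc i))"
proof (induction L)
  case (Cons r rs)
  then show ?case
    by (cases rs) (auto simp: rchain_Cons nth_Cons split: nat.splits)
qed simp

lemma rchain_take: "rchain N L \<Longrightarrow> rchain N (take n L)"
  and rchain_drop: "rchain N L \<Longrightarrow> rchain N (drop n L)"
  by (auto simp: rchain_conv_nth)

lemma rchain_nth_Suc: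
  "rchain N L \<Longrightarrow> Suc i < length L \<Longrightarrow> rhead N (L ! i) = rtail N (L ! Suc i)"
  by (simp add: rchain_conv_nth)

definition closed_walk :: "'v gnet \<Rightarrow> 'v redge list \<Rightarrow> bool" where
  "closed_walk N C \<longleftrightarrow> C \<noteq> [] \<and> rchain N C \<and> rhead N (last C) = rtail N (hd C)"

lemma closed_walk_rotate1:
  assumes "closed_walk N C"
  shows "closed_walk N (rotate1 C)"
proof (cases C)
  case (Cons r rs)
  then show ?thesis
    using assms by (cases "rs = []") (auto simp: closed_walk_def rchain_append rchain_Cons)
qed (use assms in simp)

lemma closed_walk_rotate: "closed_walk N C \<Longrightarrow> closed_walk N (rotate n C)"
  by (induction n) (simp_all add: closed_walk_rotate1)

lemma is_rcycle_rotate_to: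
  assumes "is_rcycle N C" "w \<in> rtail N ` set C"
  obtains C' where "set C' = set C" "closed_walk N C'" "rtail N (hd C') = w"
    "distinct (map (rtail N) C')" "rtail N ` set C' = rtail N ` set C"
proof -
  obtain n where n: "n < length C" "rtail N (C ! n) = w"
    using assms(2) by (auto simp: in_set_conv_nth)
  define C' where "C' = rotate n C"
  have "closed_walk N C" and dC: "distinct (map (rtail N) C)"
    using assms(1) unfolding is_rcycle_def closed_walk_def by auto
  then have "closed_walk N C'"
    unfolding C'_def by (simp add: closed_walk_rotate)
  moreover have "rtail N (hd C') = w"
    using n hd_rotate_conv_nth[of C n] by (cases C) (auto simp: C'_def)
  moreover have "distinct (map (rtail N) C')"
    using dC by (simp add: C'_def rotate_map[symmetric])
  ultimately show thesis
    using that[of C'] by (simp add: C'_def)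
qed

fun walk_flow :: "'v gnet \<Rightarrow> 'v redge list \<Rightarrow> 'v redge \<Rightarrow> real" where
  "walk_flow N [] = (\<lambda>_. 0)"
| "walk_flow N (r # rs) = (\<lambda>q. (if q = r then 1 else 0) + rgain N r * walk_flow N rs q)"

fun walk_cost :: "'v gnet \<Rightarrow> real \<Rightarrow> 'v redge list \<Rightarrow> real" where
  "walk_cost N B [] = 0"
| "walk_cost N B (r # rs) = rcost N B r + rgain N r * walk_cost N B rs"

definition walk_gain :: "'v gnet \<Rightarrow> 'v redge list \<Rightarrow> real" where
  "walk_gain N L = prod_list (map (rgain N) L)"

lemma walk_gain_simps [simp]:
  "walk_gain N [] = 1"
  "walk_gain N (r # rs) = rgain N r * walk_gain N rs"
  "walk_gain N (xs @ ys) = walk_gain N xs * walk_gain N ys"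
  by (simp_all add: walk_gain_def)

lemma walk_cost_append:
  "walk_cost N B (xs @ ys) = walk_cost N B xs + walk_gain N xs * walk_cost N B ys"
  by (induction xs) (auto simp: algebra_simps)

lemma walk_cost_regroup:
  "walk_cost N B D + walk_gain N D * (walk_cost N B W + walk_gain N W * y) =
   walk_cost N B (take j D) + walk_gain N (take j D) *
     (walk_cost N B (drop j D @ W) + walk_gain N (drop j D @ W) * y)"
proof -
  have "walk_cost N B D = walk_cost N B (take j D) + walk_gain N (take j D) * walk_cost N B (drop j D)"
    "walk_gain N D = walk_gain N (take j D) * walk_gain N (drop j D)"
    using walk_cost_append[of N B "take j D" "drop j D"] walk_gain_simps(3)[of N "take j D" "drop j D"]
    by simp_all
  then show ?thesis
    by (simp add: walk_cost_append algebra_simps)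
qed

section \<open>Flows in the residual graph\<close>

locale online_gnf =
  fixes N :: "'v gnet" and s :: "nat \<Rightarrow> 'v" and T :: nat and B :: real
  assumes wf_instance: "gnf_instance N s T" and B_nonneg: "0 \<le> B"
begin

lemma finite_verts_at: "finite (verts_at N s T t)"
  using wf_instance unfolding gnf_instance_def verts_at_def by simp

lemma finite_edges_at: "finite (edges_at N s T t)"
proof -
  have "finite (redges N)"
    using wf_instance unfolding gnf_instance_def by (metis finite_SigmaI finite_subset)
  moreover have "edges_at N s T t \<subseteq> Inl ` redges N \<union> Inr ` verts N"
    unfolding edges_at_def verts_at_def by auto
  ultimately show ?thesis
    using wf_instance unfolding gnf_instance_def by (auto intro: finite_subset)
qed

lemma finite_res_edges: "finite (res_edges N s T t x)"
proof -
  have "res_edges N s T t x \<subseteq> edges_at N s T t \<times> UNIV"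
    unfolding res_edges_def by auto
  then show ?thesis
    using finite_edges_at by (auto intro: finite_subset)
qed

lemma verts_atI:
  assumes "w \<in> verts N" "\<And>i. i \<in> {Suc t..T} \<Longrightarrow> w \<noteq> s i"
  shows "w \<in> verts_at N s T t"
  using assms unfolding verts_at_def by blast

lemma sink_in_verts_at: "sink N \<in> verts_at N s T t"
proof (rule verts_atI)
  show "sink N \<in> verts N"
    using wf_instance by (simp add: gnf_instance_def)
  show "sink N \<noteq> s i" if "i \<in> {Suc t..T}" for i
    using wf_instance that unfolding gnf_instance_def by force
qed

lemma source_in_verts_at:
  assumes "t \<in> {1..T}"
  shows "s t \<in> verts_at N s T t" and "s t \<noteq> sink N"
proof -
  have "inj_on s {1..T}"
    using wf_instance by (simp add: gnf_instance_def)
  then have "s t \<noteq> s i" if "i \<in> {Suc t..T}" for i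
    using assms that inj_onD[of s "{1..T}" t i] by auto
  then show "s t \<in> verts_at N s T t"
    using wf_instance assms by (intro verts_atI) (auto simp: gnf_instance_def)
  show "s t \<noteq> sink N"
    using wf_instance assms unfolding gnf_instance_def by auto
qed

lemma verts_at_mono: "t \<le> t' \<Longrightarrow> verts_at N s T t \<subseteq> verts_at N s T t'"
  unfolding verts_at_def by auto

lemma edges_atD:
  assumes "e \<in> edges_at N s T t"
  shows "tailE e \<in> verts_at N s T t" "headE N e \<in> verts_at N s T t"
    "0 < gainE N e" "0 \<le> costE N B e" "tailE e \<noteq> headE N e"
proof -
  consider (real) u w where "e = Inl (u, w)" "(u, w) \<in> redges N" "u \<in> verts_at N s T t"
    | (dummy) v where "e = Inr v" "v \<in> verts_at N s T t"
    using assms unfolding edges_at_def by auto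
  then have "tailE e \<in> verts_at N s T t \<and> headE N e \<in> verts_at N s T t \<and>
    0 < gainE N e \<and> 0 \<le> costE N B e \<and> tailE e \<noteq> headE N e"
  proof cases
    case real
    have "w \<in> verts_at N s T t"
    proof (rule verts_atI)
      show "w \<in> verts N"
        using wf_instance real unfolding gnf_instance_def by auto
      show "w \<noteq> s i" if "i \<in> {Suc t..T}" for i
      proof -
        have "\<forall>(u, w)\<in>redges N. w \<noteq> s i"
          using wf_instance that unfolding gnf_instance_def by auto
        then show ?thesis
          using real by auto
      qed
    qed
    moreover have "u \<noteq> w" and "0 < egain N (u, w)" and "0 < ecost N (u, w)"
      using wf_instance real unfolding gnf_instance_def by auto
    ultimately show ?thesis
      using real by (simp add: tailE_def headE_def gainE_def costE_def)
  next
    case dummy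
    then show ?thesis
      using sink_in_verts_at B_nonneg assms
      by (auto simp: tailE_def headE_def gainE_def costE_def edges_at_def)
  qed
  then show "tailE e \<in> verts_at N s T t" "headE N e \<in> verts_at N s T t"
    "0 < gainE N e" "0 \<le> costE N B e" "tailE e \<noteq> headE N e"
    by auto
qed

lemma res_edgesD:
  assumes "r \<in> res_edges N s T t x"
  shows "rtail N r \<in> verts_at N s T t" "rhead N r \<in> verts_at N s T t"
    "0 < rgain N r" "0 \<le> rcost N B r" "rtail N r \<noteq> rhead N r"
proof -
  have "fst r \<in> edges_at N s T t"
    using assms unfolding res_edges_def by auto
  from edges_atD[OF this]
  show "rtail N r \<in> verts_at N s T t" "rhead N r \<in> verts_at N s T t"
    "0 < rgain N r" "0 \<le> rcost N B r" "rtail N r \<noteq> rhead N r"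
    by (auto simp: rtail_def rhead_def rgain_def rcost_def)
qed

lemma walk_gain_pos: "set L \<subseteq> res_edges N s T t x \<Longrightarrow> 0 < walk_gain N L"
  by (induction L) (auto intro!: mult_pos_pos res_edgesD(3))

lemma walk_flow_nonneg: "set L \<subseteq> res_edges N s T t x \<Longrightarrow> 0 \<le> walk_flow N L q"
  by (induction L) (auto intro!: add_nonneg_nonneg mult_nonneg_nonneg less_imp_le[OF res_edgesD(3)])

lemma walk_flow_pos_iff: "set L \<subseteq> res_edges N s T t x \<Longrightarrow> 0 < walk_flow N L q \<longleftrightarrow> q \<in> set L"
proof (induction L)
  case (Cons r rs)
  then have "0 < rgain N r" and "0 \<le> walk_flow N rs q"
    using res_edgesD(3)[of r t x] walk_flow_nonneg[of rs t x q] by auto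
  then show ?case
    using Cons by (cases "q = r") (auto simp: add_pos_nonneg zero_less_mult_iff)
qed simp

lemma walk_flow_support:
  "set L \<subseteq> res_edges N s T t x \<Longrightarrow> walk_flow N L q \<noteq> 0 \<Longrightarrow> q \<in> res_edges N s T t x"
  using walk_flow_nonneg walk_flow_pos_iff by (metis less_eq_real_def subsetD)

lemma walk_cost_nonneg: "set L \<subseteq> res_edges N s T t x \<Longrightarrow> 0 \<le> walk_cost N B L"
  by (induction L) (auto intro!: add_nonneg_nonneg mult_nonneg_nonneg res_edgesD(4)
      less_imp_le[OF res_edgesD(3)])

definition excess :: "nat \<Rightarrow> 'v flow \<Rightarrow> ('v redge \<Rightarrow> real) \<Rightarrow> 'v \<Rightarrow> real" where
  "excess t x f w = (\<Sum>r\<in>{r \<in> res_edges N s T t x. rtail N r = w}. f r)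
     - (\<Sum>r\<in>{r \<in> res_edges N s T t x. rhead N r = w}. rgain N r * f r)"

lemma frac_aug_path_iff:
  "frac_aug_path N s T t x a f \<longleftrightarrow>
     (\<forall>r. 0 \<le> f r) \<and> (\<forall>r. f r \<noteq> 0 \<longrightarrow> r \<in> res_edges N s T t x) \<and>
     (\<forall>w \<in> verts_at N s T t - {sink N}. excess t x f w = (if w = a then 1 else 0))"
  unfolding frac_aug_path_def excess_def by simp

lemma frac_aug_path_nonneg: "frac_aug_path N s T t x a f \<Longrightarrow> 0 \<le> f r"
  and frac_aug_path_support: "frac_aug_path N s T t x a f \<Longrightarrow> f r \<noteq> 0 \<Longrightarrow> r \<in> res_edges N s T t x"
  unfolding frac_aug_path_def by blast+

lemma excess_add_scaled: "excess t x (\<lambda>q. f q + c * g q) w = excess t x f w + c * excess t x g w"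
  and excess_diff: "excess t x (\<lambda>q. f q - g q) w = excess t x f w - excess t x g w"
  and excess_divide: "excess t x (\<lambda>q. f q / c) w = excess t x f w / c"
  unfolding excess_def
  by (simp_all add: algebra_simps sum.distrib sum_distrib_left sum_subtractf sum_divide_distrib
      diff_divide_distrib)

lemma excess_single:
  "r \<in> res_edges N s T t x \<Longrightarrow> excess t x (\<lambda>q. if q = r then 1 else 0) w =
     (if rtail N r = w then 1 else 0) - rgain N r * (if rhead N r = w then 1 else 0)"
  unfolding excess_def using finite_res_edges[of t x]
  by (simp add: if_distrib[of "\<lambda>z. rgain N _ * z"] cong: if_cong)

lemma excess_walk_flow:
  "L \<noteq> [] \<Longrightarrow> rchain N L \<Longrightarrow> set L \<subseteq> res_edges N s T t x \<Longrightarrow>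
   excess t x (walk_flow N L) w =
     (if rtail N (hd L) = w then 1 else 0) - walk_gain N L * (if rhead N (last L) = w then 1 else 0)"
proof (induction L)
  case (Cons r rs)
  have split: "excess t x (walk_flow N (r # rs)) w =
      excess t x (\<lambda>q. if q = r then 1 else 0) w + rgain N r * excess t x (walk_flow N rs) w"
    using excess_add_scaled[of t x "\<lambda>q. if q = r then 1 else 0"] by simp
  show ?case
  proof (cases "rs = []")
    case True
    then show ?thesis
      using split excess_single[of r t x w] Cons.prems by (simp add: excess_def)
  next
    case False
    then have IH: "excess t x (walk_flow N rs) w = (if rtail N (hd rs) = w then 1 else 0)
        - walk_gain N rs * (if rhead N (last rs) = w then 1 else 0)"
      and "rhead N r = rtail N (hd rs)"
      using Cons by (auto simp: rchain_Cons)
    moreover have "r \<in> res_edges N s T t x"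
      using Cons.prems by simp
    ultimately show ?thesis
      unfolding split IH excess_single[OF \<open>r \<in> res_edges N s T t x\<close>]
      using False by (simp add: algebra_simps)
  qed
qed simp

lemma path_cost_add_scaled:
  "path_cost N B s T t x (\<lambda>q. f q + c * g q) = path_cost N B s T t x f + c * path_cost N B s T t x g"
  and path_cost_divide: "path_cost N B s T t x (\<lambda>q. f q / c) = path_cost N B s T t x f / c"
  unfolding path_cost_def
  by (simp_all add: algebra_simps sum.distrib sum_distrib_left sum_divide_distrib)

lemma path_cost_walk_flow:
  "set L \<subseteq> res_edges N s T t x \<Longrightarrow> path_cost N B s T t x (walk_flow N L) = walk_cost N B L"
proof (induction L)
  case (Cons r rs)
  have "path_cost N B s T t x (\<lambda>q. if q = r then 1 else 0) = rcost N B r"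
    using Cons.prems finite_res_edges[of t x] unfolding path_cost_def
    by (simp add: if_distrib[of "\<lambda>z. rcost N B _ * z"] cong: if_cong)
  then show ?case
    using Cons path_cost_add_scaled[of t x "\<lambda>q. if q = r then 1 else 0" "rgain N r"] by simp
qed (simp add: path_cost_def)

lemma path_cost_nonneg: "(\<And>r. 0 \<le> f r) \<Longrightarrow> 0 \<le> path_cost N B s T t x f"
  unfolding path_cost_def using res_edgesD(4) by (auto intro!: sum_nonneg)

lemma frac_aug_path_cost_nonneg: "frac_aug_path N s T t x a f \<Longrightarrow> 0 \<le> path_cost N B s T t x f"
  unfolding frac_aug_path_def by (blast intro: path_cost_nonneg)

section \<open>Augmenting paths as flows on lassos\<close>

definition aug_shaped :: "'v \<Rightarrow> 'v redge set \<Rightarrow> bool" where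
  "aug_shaped a S \<longleftrightarrow>
     (\<exists>P. is_rpath N P a (sink N) \<and> S = set P) \<or>
     (\<exists>C. is_rcycle N C \<and> a \<in> set (map (rtail N) C) \<and> sink N \<notin> set (map (rtail N) C) \<and>
          S = set C) \<or>
     (\<exists>C P w. is_rcycle N C \<and> a \<notin> set (map (rtail N) C) \<and> sink N \<notin> set (map (rtail N) C) \<and>
          w \<in> set (map (rtail N) C) \<and> is_rpath N P a w \<and>
          set (butlast (pverts N P)) \<inter> set (map (rtail N) C) = {} \<and> S = set P \<union> set C)"

lemma aug_path_iff_shaped:
  "aug_path N s T t x a f \<longleftrightarrow> frac_aug_path N s T t x a f \<and> aug_shaped a {r. 0 < f r}"
  unfolding aug_path_def aug_shaped_def Let_def ..

text \<open>A lasso from a is a walk with distinct tails that either ends at the sink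
  (k = None) or returns to its own i-th vertex (k = Some i); these cover the three
  shapes of augmenting paths at once.\<close>

definition lasso :: "nat \<Rightarrow> 'v flow \<Rightarrow> 'v redge list \<Rightarrow> 'v \<Rightarrow> nat option \<Rightarrow> bool" where
  "lasso t x L a k \<longleftrightarrow> L \<noteq> [] \<and> set L \<subseteq> res_edges N s T t x \<and> rchain N L \<and>
     rtail N (hd L) = a \<and> distinct (map (rtail N) L) \<and>
     (case k of
        None \<Rightarrow> rhead N (last L) = sink N \<and> sink N \<notin> set (map (rtail N) L)
      | Some i \<Rightarrow> i < length L \<and> rhead N (last L) = rtail N (L ! i) \<and>
          sink N \<notin> set (map (rtail N) (drop i L)))"

definition lasso_aug :: "nat \<Rightarrow> 'v flow \<Rightarrow> 'v \<Rightarrow> ('v redge \<Rightarrow> real) \<Rightarrow> bool" where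
  "lasso_aug t x a f \<longleftrightarrow> frac_aug_path N s T t x a f \<and>
     (\<exists>L k. lasso t x L a k \<and> {r. 0 < f r} = set L)"

lemma lassoD:
  assumes "lasso t x L a k"
  shows "L \<noteq> []" "set L \<subseteq> res_edges N s T t x" "rchain N L" "rtail N (hd L) = a"
    "distinct (map (rtail N) L)"
  using assms unfolding lasso_def by auto

lemma lasso_stem_cycle_shaped:
  assumes las: "lasso t x L a (Some i)" and "0 < i"
  shows "aug_shaped a (set L)"
proof -
  note L = lassoD[OF las]
  have i: "i < length L" "rhead N (last L) = rtail N (L ! i)"
    "sink N \<notin> set (map (rtail N) (drop i L))"
    using las unfolding lasso_def by auto
  define C where "C = drop i L"
  define P where "P = take i L"
  define w where "w = rtail N (L ! i)"
  have tails: "map (rtail N) L = map (rtail N) P @ map (rtail N) C"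
    by (simp add: P_def C_def flip: map_append)
  have "C \<noteq> []" and hdC: "hd C = L ! i"
    using i by (simp_all add: C_def hd_drop_conv_nth)
  moreover have "rhead N (last C) = rtail N (hd C)"
    using i hdC by (simp add: C_def)
  ultimately have "is_rcycle N C"
    using L(2-5) tails by (simp add: is_rcycle_def C_def rchain_drop)
  moreover have "w \<in> set (map (rtail N) C)"
    using hdC \<open>C \<noteq> []\<close> w_def by (cases C) auto
  moreover have "rhead N (last P) = w"
    using rchain_nth_Suc[OF L(3), of "i - 1"] \<open>0 < i\<close> i(1)
    by (simp add: P_def w_def last_take_conv_nth)
  then have "pverts N P = take (Suc i) (map (rtail N) L)"
    using i(1) by (simp add: pverts_def P_def w_def take_map take_Suc_conv_app_nth)
  then have "is_rpath N P a w"
    using \<open>0 < i\<close> L \<open>rhead N (last P) = w\<close> by (simp add: is_rpath_def P_def rchain_take)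
  moreover have "a \<in> set (map (rtail N) P)"
    using \<open>0 < i\<close> L(1,4) by (cases L) (auto simp: P_def take_Cons')
  then have "a \<notin> set (map (rtail N) C)"
    and "set (butlast (pverts N P)) \<inter> set (map (rtail N) C) = {}"
    using L(5) unfolding tails by (auto simp: pverts_def)
  moreover have "set L = set P \<union> set C"
    by (metis P_def C_def append_take_drop_id set_append)
  ultimately show ?thesis
    using i(3) unfolding aug_shaped_def C_def by blast
qed

lemma lasso_shaped:
  assumes las: "lasso t x L a k"
  shows "aug_shaped a (set L)"
proof (cases k)
  case None
  then have "is_rpath N L a (sink N)"
    using las unfolding lasso_def is_rpath_def pverts_def by auto
  then show ?thesis
    unfolding aug_shaped_def by blast
next
  case (Some i)
  note L = lassoD[OF las]
  show ?thesis
  proof (cases "i = 0")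
    case True
    then have "is_rcycle N L" and "sink N \<notin> set (map (rtail N) L)"
      using las Some L(1) unfolding lasso_def is_rcycle_def by (auto simp: hd_conv_nth)
    moreover have "a \<in> set (map (rtail N) L)"
      using L(1,4) by (cases L) auto
    ultimately show ?thesis
      unfolding aug_shaped_def by blast
  next
    case False
    then show ?thesis
      using las Some lasso_stem_cycle_shaped by blast
  qed
qed

lemma shaped_lasso:
  assumes "aug_shaped a S" "S \<subseteq> res_edges N s T t x"
  obtains L k where "lasso t x L a k" "S = set L"
proof -
  consider (path) P where "is_rpath N P a (sink N)" "S = set P"
    | (cycle) C where "is_rcycle N C" "a \<in> set (map (rtail N) C)"
        "sink N \<notin> set (map (rtail N) C)" "S = set C"
    | (stem_cycle) C P w where "is_rcycle N C" "a \<notin> set (map (rtail N) C)"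
        "sink N \<notin> set (map (rtail N) C)" "w \<in> set (map (rtail N) C)" "is_rpath N P a w"
        "set (butlast (pverts N P)) \<inter> set (map (rtail N) C) = {}" "S = set P \<union> set C"
    using assms(1) unfolding aug_shaped_def by blast
  then show thesis
  proof cases
    case path
    then have "lasso t x P a None"
      using assms(2) unfolding lasso_def is_rpath_def pverts_def by auto
    then show thesis
      using that path by blast
  next
    case cycle
    then obtain C' where C': "set C' = set C" "closed_walk N C'" "rtail N (hd C') = a"
      "distinct (map (rtail N) C')" "rtail N ` set C' = rtail N ` set C"
      using is_rcycle_rotate_to[OF cycle(1)] cycle(2) by (metis set_map)
    then have "lasso t x C' a (Some 0)"
      using cycle assms(2) unfolding lasso_def closed_walk_def by (auto simp: hd_conv_nth)
    then show thesis
      using that cycle C'(1) by blast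
  next
    case stem_cycle
    then obtain C' where C': "set C' = set C" "closed_walk N C'" "rtail N (hd C') = w"
      "distinct (map (rtail N) C')" "rtail N ` set C' = rtail N ` set C"
      using is_rcycle_rotate_to[OF stem_cycle(1)] stem_cycle(4) by (metis set_map)
    have P: "P \<noteq> []" "rchain N P" "rtail N (hd P) = a" "rhead N (last P) = w"
      using stem_cycle(5) unfolding is_rpath_def by auto
    have "C' \<noteq> []" "rhead N (last C') = rtail N (C' ! 0)"
      using C'(2,3) unfolding closed_walk_def by (auto simp: hd_conv_nth)
    moreover have "distinct (map (rtail N) (P @ C'))"
      using stem_cycle(5,6) C'(4,5) by (auto simp: is_rpath_def pverts_def)
    moreover have "rchain N (P @ C')"
      using P C' \<open>C' \<noteq> []\<close> unfolding closed_walk_def by (simp add: rchain_append)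
    ultimately have "lasso t x (P @ C') a (Some (length P))"
      using stem_cycle(3,7) assms(2) P(1,3) C'(1,5) unfolding lasso_def by (auto simp: nth_append)
    then show thesis
      using that stem_cycle(7) C'(1) by auto
  qed
qed

lemma aug_path_iff_lasso_aug: "aug_path N s T t x a f \<longleftrightarrow> lasso_aug t x a f"
proof -
  have "{r. 0 < f r} \<subseteq> res_edges N s T t x" if "frac_aug_path N s T t x a f"
    using that unfolding frac_aug_path_def by force
  then show ?thesis
    unfolding aug_path_iff_shaped lasso_aug_def
    by (metis lasso_shaped shaped_lasso)
qed

lemma lasso_enters_start:
  assumes las: "lasso t x L a k" and "a \<noteq> sink N" and j: "j < length L" "rhead N (L ! j) = a"
  shows "Suc j = length L \<and> k = Some 0"
proof -
  note L = lassoD[OF las]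
  have a: "rtail N (L ! 0) = a"
    using L(1,4) by (simp add: hd_conv_nth)
  have "\<not> Suc j < length L"
  proof
    assume "Suc j < length L"
    then have "rtail N (L ! Suc j) = rtail N (L ! 0)"
      using rchain_nth_Suc[OF L(3)] j a by simp
    then show False
      using nth_eq_iff_index_eq[OF L(5)] \<open>Suc j < length L\<close> L(1) by fastforce
  qed
  then have len: "Suc j = length L"
    using j(1) by simp
  then have last: "last L = L ! j"
    by (metis last_conv_nth diff_Suc_1 list.size(3) nat.distinct(1))
  have "k = Some 0"
  proof (cases k)
    case None
    then show ?thesis
      using las j(2) last \<open>a \<noteq> sink N\<close> unfolding lasso_def by simp
  next
    case (Some i)
    then have "i < length L" "rtail N (L ! i) = rtail N (L ! 0)"
      using las last j(2) a unfolding lasso_def by auto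
    then show ?thesis
      using nth_eq_iff_index_eq[OF L(5)] L(1) Some by fastforce
  qed
  with len show ?thesis
    by simp
qed

lemma frac_aug_path_peel:
  assumes fr: "frac_aug_path N s T t x a h" and a: "a \<in> verts_at N s T t" "a \<noteq> sink N"
    and e: "e \<in> res_edges N s T t x" "rtail N e = a"
    and out: "\<And>r. r \<in> res_edges N s T t x \<Longrightarrow> rtail N r = a \<Longrightarrow> r \<noteq> e \<Longrightarrow> h r = 0"
  shows "h e = 1 + (\<Sum>r\<in>{r \<in> res_edges N s T t x. rhead N r = a}. rgain N r * h r)"
    and "frac_aug_path N s T t x (rhead N e) (\<lambda>q. (h q - (if q = e then 1 else 0)) / rgain N e)"
proof -
  let ?R = "res_edges N s T t x"
  have hnn: "\<And>r. 0 \<le> h r" and hR: "\<And>r. h r \<noteq> 0 \<Longrightarrow> r \<in> ?R"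
    and hc: "\<And>w. w \<in> verts_at N s T t - {sink N} \<Longrightarrow> excess t x h w = (if w = a then 1 else 0)"
    using fr unfolding frac_aug_path_iff by auto
  have g: "0 < rgain N e"
    using res_edgesD(3)[OF e(1)] .
  have "(\<Sum>r\<in>{r \<in> ?R. rtail N r = a}. h r) = h e"
    using finite_res_edges e out by (simp add: sum.remove sum.neutral)
  then show he: "h e = 1 + (\<Sum>r\<in>{r \<in> ?R. rhead N r = a}. rgain N r * h r)"
    using hc[of a] a unfolding excess_def by simp
  have "0 \<le> (\<Sum>r\<in>{r \<in> ?R. rhead N r = a}. rgain N r * h r)"
    using hnn by (intro sum_nonneg mult_nonneg_nonneg) (auto dest: res_edgesD(3))
  then have "0 \<le> (h q - (if q = e then 1 else 0)) / rgain N e" for q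
    using he hnn[of q] g by auto
  moreover have "q \<in> ?R" if "(h q - (if q = e then 1 else 0)) / rgain N e \<noteq> 0" for q
    using that hR e(1) by (auto split: if_splits)
  moreover have "excess t x (\<lambda>q. (h q - (if q = e then 1 else 0)) / rgain N e) w =
      (if w = rhead N e then 1 else 0)" if "w \<in> verts_at N s T t - {sink N}" for w
    using hc[OF that] excess_single[OF e(1), of w] e(2) g
    by (simp add: excess_divide excess_diff)
  ultimately show "frac_aug_path N s T t x (rhead N e) (\<lambda>q. (h q - (if q = e then 1 else 0)) / rgain N e)"
    unfolding frac_aug_path_iff by blast
qed

lemma lasso_Cons_open:
  assumes las: "lasso t x (e # L') a k" and "k \<noteq> Some 0" "L' \<noteq> []"
  shows "lasso t x L' (rhead N e) (map_option (\<lambda>i. i - 1) k)"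
proof (cases k)
  case (Some i)
  then have "i \<noteq> 0"
    using assms(2) by simp
  then have "(e # L') ! i = L' ! (i - 1)" "drop i (e # L') = drop (i - 1) L'"
    by (cases i; simp)+
  then show ?thesis
    using las Some \<open>L' \<noteq> []\<close> \<open>i \<noteq> 0\<close> unfolding lasso_def by (auto simp: rchain_Cons)
qed (use las \<open>L' \<noteq> []\<close> in \<open>auto simp: lasso_def rchain_Cons\<close>)

lemma lasso_Cons_closed:
  assumes las: "lasso t x (e # L') a (Some 0)"
  shows "L' \<noteq> []" and "lasso t x (L' @ [e]) (rhead N e) (Some 0)"
proof -
  have e: "e \<in> res_edges N s T t x" "rhead N (last (e # L')) = rtail N e"
    using las unfolding lasso_def by auto
  show "L' \<noteq> []"
    using e res_edgesD(5)[OF e(1)] by auto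
  then have "rchain N (L' @ [e])" and "rtail N (hd L') = rhead N e"
    using las e(2) unfolding lasso_def by (auto simp: rchain_Cons rchain_append)
  then show "lasso t x (L' @ [e]) (rhead N e) (Some 0)"
    using las \<open>L' \<noteq> []\<close> unfolding lasso_def by (auto simp: hd_conv_nth nth_append)
qed

lemma lasso_inflow_pos_iff:
  assumes an: "a \<noteq> sink N" and fr: "frac_aug_path N s T t x a h" and las: "lasso t x L a k"
    and S: "{r. 0 < h r} = set L"
  shows "0 \<le> (\<Sum>r\<in>{r \<in> res_edges N s T t x. rhead N r = a}. rgain N r * h r)"
    (is "0 \<le> sum ?g ?In")
    and "0 < (\<Sum>r\<in>{r \<in> res_edges N s T t x. rhead N r = a}. rgain N r * h r) \<longleftrightarrow> k = Some 0"
proof -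
  note L = lassoD[OF las]
  have hnn: "\<And>r. 0 \<le> h r"
    using fr unfolding frac_aug_path_iff by blast
  have g_nonneg: "0 \<le> ?g r" if "r \<in> ?In" for r
    using that hnn[of r] res_edgesD(3)[of r t x] by simp
  have g_pos: "0 < ?g r \<longleftrightarrow> r \<in> set L" if "r \<in> ?In" for r
    using that S res_edgesD(3)[of r t x] by (auto simp: zero_less_mult_iff)
  show "0 \<le> sum ?g ?In"
    using g_nonneg by (rule sum_nonneg)
  have "sum ?g ?In = 0 \<longleftrightarrow> (\<forall>r\<in>?In. ?g r = 0)"
    using finite_res_edges g_nonneg by (intro sum_nonneg_eq_0_iff) auto
  then have "0 < sum ?g ?In \<longleftrightarrow> (\<exists>r\<in>?In. 0 < ?g r)"
    using g_nonneg sum_nonneg[of ?In ?g] by (auto simp: order_less_le)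
  also have "\<dots> \<longleftrightarrow> (\<exists>r\<in>set L. rhead N r = a)"
    using g_pos L(2) by blast
  also have "\<dots> \<longleftrightarrow> k = Some 0"
  proof
    assume "\<exists>r\<in>set L. rhead N r = a"
    then show "k = Some 0"
      using lasso_enters_start[OF las an] by (metis in_set_conv_nth)
  next
    assume "k = Some 0"
    then have "rhead N (last L) = a"
      using las L(1) unfolding lasso_def by (simp add: hd_conv_nth)
    then show "\<exists>r\<in>set L. rhead N r = a"
      using L(1) last_in_set by blast
  qed
  finally show "0 < sum ?g ?In \<longleftrightarrow> k = Some 0" .
qed

lemma lasso_aug_peel:
  assumes an: "a \<noteq> sink N" and fr: "frac_aug_path N s T t x a h"
    and las: "lasso t x (e # L') a k" and S: "{r. 0 < h r} = set (e # L')"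
    and nontriv: "L' \<noteq> [] \<or> k \<noteq> None"
  shows "\<exists>h1 L1 k1. h = (\<lambda>q. (if q = e then 1 else 0) + rgain N e * h1 q) \<and>
     frac_aug_path N s T t x (rhead N e) h1 \<and> lasso t x L1 (rhead N e) k1 \<and>
     {r. 0 < h1 r} = set L1 \<and> set L1 \<subseteq> set (e # L') \<and> take (length L') L1 = L'"
proof -
  note L = lassoD[OF las]
  have e: "e \<in> res_edges N s T t x" "rtail N e = a"
    using L by auto
  have g: "0 < rgain N e"
    using res_edgesD(3)[OF e(1)] .
  have out: "h r = 0" if "rtail N r = a" "r \<noteq> e" for r
  proof (rule ccontr)
    assume "h r \<noteq> 0"
    then have "r \<in> set (e # L')"
      using S fr unfolding frac_aug_path_iff by (metis less_eq_real_def mem_Collect_eq)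
    then show False
      using that L(5) e(2) by auto
  qed
  define h1 where "h1 = (\<lambda>q. (h q - (if q = e then 1 else 0)) / rgain N e)"
  have he: "h e = 1 + (\<Sum>r\<in>{r \<in> res_edges N s T t x. rhead N r = a}. rgain N r * h r)"
    and fr1: "frac_aug_path N s T t x (rhead N e) h1"
    using frac_aug_path_peel[OF fr _ an e] out res_edgesD(1)[OF e(1)] e(2)
    unfolding h1_def by auto
  have h: "h = (\<lambda>q. (if q = e then 1 else 0) + rgain N e * h1 q)"
    using g unfolding h1_def by auto
  have supp_other: "0 < h1 q \<longleftrightarrow> q \<in> set (e # L')" if "q \<noteq> e" for q
    using that S g unfolding h1_def by (auto simp: zero_less_divide_iff)
  show ?thesis
  proof (cases "k = Some 0")
    case False
    then have "h e = 1"
      using he lasso_inflow_pos_iff[OF an fr las S] by simp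
    then have "{r. 0 < h1 r} = set L'"
      using supp_other L(5) unfolding h1_def by auto
    moreover have "L' \<noteq> []"
      using nontriv False las unfolding lasso_def by (auto split: option.splits)
    moreover have "set L' \<subseteq> set (e # L')" "take (length L') L' = L'"
      by auto
    ultimately show ?thesis
      using h fr1 lasso_Cons_open[OF las False] by blast
  next
    case True
    then have "1 < h e"
      using he lasso_inflow_pos_iff[OF an fr las S] by simp
    then have "{r. 0 < h1 r} = set (L' @ [e])"
      using supp_other g unfolding h1_def by auto
    moreover have "set (L' @ [e]) \<subseteq> set (e # L')" "take (length L') (L' @ [e]) = L'"
      by auto
    ultimately show ?thesis
      using h fr1 lasso_Cons_closed[OF las[unfolded True]] by blast
  qed
qed

lemma lasso_aug_peel_prefix:
  assumes "i < length L" "\<forall>j<i. rtail N (L ! j) \<noteq> sink N" "frac_aug_path N s T t x a h"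
    "lasso t x L a k" "{r. 0 < h r} = set L"
  shows "\<exists>h' L2 k2. h = (\<lambda>q. walk_flow N (take i L) q + walk_gain N (take i L) * h' q) \<and>
     frac_aug_path N s T t x (rtail N (L ! i)) h' \<and> lasso t x L2 (rtail N (L ! i)) k2 \<and>
     {r. 0 < h' r} = set L2 \<and> set L2 \<subseteq> set L"
  using assms
proof (induction i arbitrary: h a L k)
  case 0
  then have "rtail N (L ! 0) = a"
    using lassoD[OF "0.prems"(4)] by (simp add: hd_conv_nth)
  then show ?case
    using "0.prems" by auto
next
  case (Suc i)
  obtain e L' where L: "L = e # L'"
    using Suc.prems(1) by (cases L) auto
  have "a \<noteq> sink N"
    using Suc.prems(2) lassoD(4)[OF Suc.prems(4)] L by auto
  have i: "i < length L'"
    using Suc.prems(1) L by simp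
  then have "L' \<noteq> []"
    by auto
  with lasso_aug_peel[OF \<open>a \<noteq> sink N\<close> Suc.prems(3) Suc.prems(4,5)[unfolded L]]
  obtain h1 L1 k1 where
    h: "h = (\<lambda>q. (if q = e then 1 else 0) + rgain N e * h1 q)" and
    h1: "frac_aug_path N s T t x (rhead N e) h1" "lasso t x L1 (rhead N e) k1" "{r. 0 < h1 r} = set L1"
    and L1: "set L1 \<subseteq> set L" "take (length L') L1 = L'"
    unfolding L by blast
  have L1_nth: "L1 ! j = L ! Suc j" if "j \<le> i" for j
    using L1(2) i that L by (metis Suc_le_eq le_less_trans nth_Cons_Suc nth_take)
  have "i < length L1"
    using L1(2) i by (metis length_take min.strict_boundedE)
  moreover have "\<forall>j<i. rtail N (L1 ! j) \<noteq> sink N"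
    using Suc.prems(2) L1_nth by auto
  ultimately obtain h' L2 k2 where
    h1_split: "h1 = (\<lambda>q. walk_flow N (take i L1) q + walk_gain N (take i L1) * h' q)" and
    h': "frac_aug_path N s T t x (rtail N (L1 ! i)) h'" "lasso t x L2 (rtail N (L1 ! i)) k2"
      "{r. 0 < h' r} = set L2" "set L2 \<subseteq> set L1"
    using Suc.IH h1 by blast
  have "take i L1 = take i L'"
    using L1(2) i by (metis min.strict_order_iff take_take)
  then have "take (Suc i) L = e # take i L1"
    using L by simp
  then have "h = (\<lambda>q. walk_flow N (take (Suc i) L) q + walk_gain N (take (Suc i) L) * h' q)"
    unfolding h h1_split by (simp add: algebra_simps)
  moreover have "set L2 \<subseteq> set L"
    using h'(4) L1(1) by blast
  ultimately show ?case
    using h'(1-3) L1_nth[of i] by auto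
qed

section \<open>Heights and sink-free augmenting paths\<close>

definition sinkfree_aug :: "nat \<Rightarrow> 'v flow \<Rightarrow> 'v \<Rightarrow> ('v redge \<Rightarrow> real) \<Rightarrow> bool" where
  "sinkfree_aug t x a f \<longleftrightarrow> frac_aug_path N s T t x a f \<and>
     (\<exists>L k. lasso t x L a k \<and> sink N \<notin> set (map (rtail N) L) \<and> {r. 0 < f r} = set L)"

lemma sinkfree_aug_imp_aug_path: "sinkfree_aug t x a f \<Longrightarrow> aug_path N s T t x a f"
  unfolding aug_path_iff_lasso_aug sinkfree_aug_def lasso_aug_def by blast

lemma scaled_walk_flow_frac_aug_path:
  assumes "L \<noteq> []" "rchain N L" "set L \<subseteq> res_edges N s T t x" "rtail N (hd L) = a" "0 < c"
    and "rhead N (last L) = sink N \<and> c = 1 \<or> rhead N (last L) = a \<and> c = 1 - walk_gain N L"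
  shows "frac_aug_path N s T t x a (\<lambda>q. walk_flow N L q / c)"
    and "{r. 0 < walk_flow N L r / c} = set L"
proof -
  show "{r. 0 < walk_flow N L r / c} = set L"
    using walk_flow_pos_iff[OF assms(3)] \<open>0 < c\<close> by (auto simp: zero_less_divide_iff)
  have "excess t x (\<lambda>q. walk_flow N L q / c) w = (if w = a then 1 else 0)"
    if "w \<in> verts_at N s T t - {sink N}" for w
    using that assms excess_walk_flow[OF assms(1-3), of w] by (auto simp: excess_divide)
  then show "frac_aug_path N s T t x a (\<lambda>q. walk_flow N L q / c)"
    unfolding frac_aug_path_iff
    using walk_flow_nonneg[OF assms(3)] walk_flow_support[OF assms(3)] \<open>0 < c\<close> by auto
qed

lemma walk_flow_sinkfree_aug:
  assumes "L \<noteq> []" "rchain N L" "set L \<subseteq> res_edges N s T t x" "rtail N (hd L) = a"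
    "distinct (map (rtail N) L)" "rhead N (last L) = sink N" "sink N \<notin> set (map (rtail N) L)"
  shows "sinkfree_aug t x a (walk_flow N L)"
proof -
  have "lasso t x L a None"
    using assms unfolding lasso_def by simp
  then show ?thesis
    using scaled_walk_flow_frac_aug_path[OF assms(1-4), of 1] assms(6,7)
    unfolding sinkfree_aug_def by auto
qed

lemma cycle_flow_sinkfree_aug:
  assumes "L \<noteq> []" "rchain N L" "set L \<subseteq> res_edges N s T t x" "rtail N (hd L) = a"
    "distinct (map (rtail N) L)" "rhead N (last L) = a" "sink N \<notin> set (map (rtail N) L)"
    "walk_gain N L < 1"
  shows "sinkfree_aug t x a (\<lambda>q. walk_flow N L q / (1 - walk_gain N L))"
proof -
  have "lasso t x L a (Some 0)"
    using assms unfolding lasso_def by (simp add: hd_conv_nth)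
  then show ?thesis
    using scaled_walk_flow_frac_aug_path[OF assms(1-4), of "1 - walk_gain N L"] assms(6-8)
    unfolding sinkfree_aug_def by auto
qed

lemma height_le_path_cost:
  assumes "a \<noteq> sink N" "aug_path N s T t x a f"
  shows "height N B s T t x a \<le> path_cost N B s T t x f"
proof -
  have "bdd_below (path_cost N B s T t x ` {f. aug_path N s T t x a f})"
    by (rule bdd_belowI[of _ 0]) (auto simp: aug_path_def frac_aug_path_cost_nonneg)
  then show ?thesis
    unfolding height_def using assms by (auto intro: cInf_lower)
qed

lemma dummy_edge_aug_path:
  assumes "a \<in> verts_at N s T t" "a \<noteq> sink N"
  shows "aug_path N s T t x a (walk_flow N [(Inr a, True)])"
proof -
  have "(Inr a, True) \<in> res_edges N s T t x"
    using assms unfolding res_edges_def edges_at_def below_cap_def by auto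
  then have "sinkfree_aug t x a (walk_flow N [(Inr a, True)])"
    using assms by (intro walk_flow_sinkfree_aug) (auto simp: rtail_def rhead_def tailE_def headE_def)
  then show ?thesis
    by (rule sinkfree_aug_imp_aug_path)
qed

lemma le_height:
  assumes "a \<in> verts_at N s T t" "a \<noteq> sink N"
    and "\<And>f. aug_path N s T t x a f \<Longrightarrow> z \<le> path_cost N B s T t x f"
  shows "z \<le> height N B s T t x a"
  using assms dummy_edge_aug_path[OF assms(1,2)] unfolding height_def
  by (auto intro!: cInf_greatest)

lemma height_nonneg:
  assumes "a \<in> verts_at N s T t"
  shows "0 \<le> height N B s T t x a"
proof (cases "a = sink N")
  case False
  then show ?thesis
    using assms by (intro le_height) (auto simp: aug_path_def frac_aug_path_cost_nonneg)
qed (simp add: height_def)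

lemma lasso_prefix_to_sink:
  assumes las: "lasso t x L w k" and "w \<noteq> sink N"
    and i: "i < length L" "rtail N (L ! i) = sink N" "\<forall>j<i. rtail N (L ! j) \<noteq> sink N"
  shows "sinkfree_aug t x w (walk_flow N (take i L))"
proof -
  note L = lassoD[OF las]
  have "i \<noteq> 0"
    using i(2) L(1,4) \<open>w \<noteq> sink N\<close> by (cases i) (auto simp: hd_conv_nth)
  then have "rhead N (last (take i L)) = sink N"
    using rchain_nth_Suc[OF L(3), of "i - 1"] i by (simp add: last_take_conv_nth)
  moreover have "sink N \<notin> set (map (rtail N) (take i L))"
    using i(3) unfolding notin_set_map_conv_nth by simp
  moreover have "distinct (map (rtail N) (take i L))"
    using L(5) by (metis distinct_take take_map)
  moreover have "set (take i L) \<subseteq> res_edges N s T t x" "rchain N (take i L)"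
    "rtail N (hd (take i L)) = w"
    using \<open>i \<noteq> 0\<close> L set_take_subset[of i L] by (auto simp: rchain_take)
  ultimately show ?thesis
    using \<open>i \<noteq> 0\<close> L(1) by (intro walk_flow_sinkfree_aug) auto
qed

text \<open>If a lasso passes through the sink, its prefix up to the sink is an augmenting
  path that is no more expensive, since all costs are nonnegative.\<close>

lemma cheaper_sinkfree_aug:
  assumes "w \<noteq> sink N" "lasso_aug t x w h"
  shows "\<exists>h2. sinkfree_aug t x w h2 \<and> path_cost N B s T t x h2 \<le> path_cost N B s T t x h"
proof -
  obtain L k where fr: "frac_aug_path N s T t x w h" and las: "lasso t x L w k"
    and S: "{r. 0 < h r} = set L"
    using assms(2) unfolding lasso_aug_def by blast
  show ?thesis
  proof (cases "\<exists>i. i < length L \<and> rtail N (L ! i) = sink N")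
    case False
    then have "sink N \<notin> set (map (rtail N) L)"
      unfolding notin_set_map_conv_nth by blast
    then have "sinkfree_aug t x w h"
      unfolding sinkfree_aug_def using fr las S by blast
    then show ?thesis
      by blast
  next
    case True
    then obtain i where i: "i < length L" "rtail N (L ! i) = sink N" "\<forall>j<i. rtail N (L ! j) \<noteq> sink N"
      by (rule obtain_first_nth)
    obtain h' where h: "h = (\<lambda>q. walk_flow N (take i L) q + walk_gain N (take i L) * h' q)"
      and h': "frac_aug_path N s T t x (sink N) h'"
      using lasso_aug_peel_prefix[OF i(1,3) fr las S] i(2) by auto
    have W: "set (take i L) \<subseteq> res_edges N s T t x"
      using lassoD(2)[OF las] set_take_subset[of i L] by blast
    have "path_cost N B s T t x h = walk_cost N B (take i L)
        + walk_gain N (take i L) * path_cost N B s T t x h'"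
      unfolding h path_cost_add_scaled path_cost_walk_flow[OF W] ..
    moreover have "0 \<le> path_cost N B s T t x h'"
      using h' by (rule frac_aug_path_cost_nonneg)
    ultimately have "path_cost N B s T t x (walk_flow N (take i L)) \<le> path_cost N B s T t x h"
      using walk_gain_pos[OF W] path_cost_walk_flow[OF W] by simp
    then show ?thesis
      using lasso_prefix_to_sink[OF las assms(1) i] by blast
  qed
qed

lemma sinkfree_aug_peel_prefix:
  assumes h: "frac_aug_path N s T t x w h" "lasso t x L w k" "sink N \<notin> set (map (rtail N) L)"
    "{r. 0 < h r} = set L" and i: "i < length L"
  obtains h' where "h = (\<lambda>q. walk_flow N (take i L) q + walk_gain N (take i L) * h' q)"
    "sinkfree_aug t x (rtail N (L ! i)) h'"
proof -
  have "\<forall>j<i. rtail N (L ! j) \<noteq> sink N"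
    using h(3) i unfolding notin_set_map_conv_nth by simp
  then obtain h' L' k' where "h = (\<lambda>q. walk_flow N (take i L) q + walk_gain N (take i L) * h' q)"
    "frac_aug_path N s T t x (rtail N (L ! i)) h'" "lasso t x L' (rtail N (L ! i)) k'"
    "{r. 0 < h' r} = set L'" "set L' \<subseteq> set L"
    using lasso_aug_peel_prefix[OF i _ h(1,2,4)] by blast
  moreover have "sink N \<notin> set (map (rtail N) L')"
    using h(3) \<open>set L' \<subseteq> set L\<close> by auto
  ultimately show thesis
    using that unfolding sinkfree_aug_def by blast
qed

section \<open>Extending augmenting paths backwards\<close>

definition sinkfree_rpath :: "nat \<Rightarrow> 'v flow \<Rightarrow> 'v redge list \<Rightarrow> 'v \<Rightarrow> 'v \<Rightarrow> bool" where
  "sinkfree_rpath t x D u w \<longleftrightarrow> set D \<subseteq> res_edges N s T t x \<and> rchain N D \<and>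
     (D = [] \<longrightarrow> u = w) \<and> (D \<noteq> [] \<longrightarrow> rtail N (hd D) = u \<and> rhead N (last D) = w) \<and>
     distinct (map (rtail N) D @ [w]) \<and> sink N \<notin> set (map (rtail N) D @ [w])"

lemma frac_aug_path_prepend:
  assumes "D \<noteq> []" "rchain N D" "set D \<subseteq> res_edges N s T t x" "rtail N (hd D) = u"
    "rhead N (last D) = w" "frac_aug_path N s T t x w h"
  shows "frac_aug_path N s T t x u (\<lambda>q. walk_flow N D q + walk_gain N D * h q)"
proof -
  have "excess t x (\<lambda>q. walk_flow N D q + walk_gain N D * h q) v = (if v = u then 1 else 0)"
    if "v \<in> verts_at N s T t - {sink N}" for v
    using that assms excess_walk_flow[OF assms(1-3), of v]
    unfolding excess_add_scaled frac_aug_path_iff by auto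
  moreover have "0 \<le> walk_flow N D q + walk_gain N D * h q" for q
    using walk_flow_nonneg[OF assms(3)] walk_gain_pos[OF assms(3)] frac_aug_path_nonneg[OF assms(6)]
    by (simp add: add_nonneg_nonneg)
  moreover have "q \<in> res_edges N s T t x" if "walk_flow N D q + walk_gain N D * h q \<noteq> 0" for q
    using that walk_flow_support[OF assms(3), of q] frac_aug_path_support[OF assms(6), of q]
    by (cases "walk_flow N D q = 0") auto
  ultimately show ?thesis
    unfolding frac_aug_path_iff by blast
qed

lemma lasso_prepend:
  assumes "lasso t x L w k" "D \<noteq> []" "rchain N D" "set D \<subseteq> res_edges N s T t x"
    "rtail N (hd D) = u" "rhead N (last D) = w" "distinct (map (rtail N) D @ map (rtail N) L)"
    "sink N \<notin> set (map (rtail N) D)"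
  shows "lasso t x (D @ L) u (map_option (\<lambda>i. i + length D) k)"
proof -
  note L = lassoD[OF assms(1)]
  have "rchain N (D @ L)"
    using assms(2,3,6) L(1,3,4) by (simp add: rchain_append)
  moreover have "sink N \<notin> set (map (rtail N) (drop (i + length D) (D @ L)))"
    if "sink N \<notin> set (map (rtail N) (drop i L))" for i
    using that by simp
  ultimately show ?thesis
    using assms L(1,2) unfolding lasso_def by (auto simp: nth_append split: option.splits)
qed

lemma sinkfree_aug_prepend:
  assumes D: "sinkfree_rpath t x D u w"
    and h: "frac_aug_path N s T t x w h" "lasso t x L w k" "sink N \<notin> set (map (rtail N) L)"
      "{r. 0 < h r} = set L"
    and disj: "set (map (rtail N) D) \<inter> set (map (rtail N) L) = {}"
  shows "sinkfree_aug t x u (\<lambda>q. walk_flow N D q + walk_gain N D * h q)"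
proof (cases "D = []")
  case True
  then show ?thesis
    using D h unfolding sinkfree_rpath_def sinkfree_aug_def by auto
next
  case False
  have D': "set D \<subseteq> res_edges N s T t x" "rchain N D" "rtail N (hd D) = u" "rhead N (last D) = w"
    "distinct (map (rtail N) D)" "sink N \<notin> set (map (rtail N) D)"
    using D False unfolding sinkfree_rpath_def by auto
  have "0 < walk_flow N D q + walk_gain N D * h q \<longleftrightarrow> q \<in> set D \<or> q \<in> set L" for q
  proof -
    have "0 \<le> walk_flow N D q" "0 \<le> walk_gain N D * h q"
      using walk_flow_nonneg[OF D'(1)] walk_gain_pos[OF D'(1)] frac_aug_path_nonneg[OF h(1)] by auto
    then have "0 < walk_flow N D q + walk_gain N D * h q \<longleftrightarrow> 0 < walk_flow N D q \<or> 0 < walk_gain N D * h q"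
      by linarith
    then show ?thesis
      using walk_flow_pos_iff[OF D'(1)] walk_gain_pos[OF D'(1)] h(4) by (auto simp: zero_less_mult_iff)
  qed
  then have "{r. 0 < walk_flow N D r + walk_gain N D * h r} = set (D @ L)"
    by auto
  moreover have "lasso t x (D @ L) u (map_option (\<lambda>i. i + length D) k)"
    using lasso_prepend[OF h(2) False D'(2,1,3,4)] D'(5) disj lassoD(5)[OF h(2)] D'(6) by simp
  moreover have "sink N \<notin> set (map (rtail N) (D @ L))"
    using h(3) D'(6) by simp
  ultimately show ?thesis
    unfolding sinkfree_aug_def using frac_aug_path_prepend[OF False D'(2,1,3,4) h(1)] by blast
qed

lemma sinkfree_rpath_take:
  assumes D: "sinkfree_rpath t x D u w" and j: "j < length D"
  shows "sinkfree_rpath t x (take j D) u (rtail N (D ! j))"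
proof -
  have D': "set D \<subseteq> res_edges N s T t x" "rchain N D" "rtail N (hd D) = u"
    "distinct (map (rtail N) D)" "sink N \<notin> set (map (rtail N) D)"
    using D j unfolding sinkfree_rpath_def by auto
  have "rhead N (last (take j D)) = rtail N (D ! j)" if "j \<noteq> 0"
    using that j rchain_nth_Suc[OF D'(2), of "j - 1"] by (simp add: last_take_conv_nth)
  moreover have "u = rtail N (D ! j)" if "j = 0"
    using that j D'(3) by (simp add: hd_conv_nth)
  moreover have "distinct (map (rtail N) (take j D) @ [rtail N (D ! j)])"
    using D'(4) j distinct_nth_notin_set_take[OF D'(4), of j]
    by (simp add: take_map[symmetric] distinct_take)
  moreover have "sink N \<notin> set (map (rtail N) (take j D) @ [rtail N (D ! j)])"
    using D'(5) j set_take_subset[of j D] by (auto simp: image_subset_iff)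
  ultimately show ?thesis
    using D' j set_take_subset[of j D] unfolding sinkfree_rpath_def by (auto simp: rchain_take)
qed

lemma cycle_through_lasso_sinkfree_aug:
  assumes D: "sinkfree_rpath t x D u w" and j: "j < length D"
    and las: "lasso t x L w k" "sink N \<notin> set (map (rtail N) L)"
    and i: "0 < i" "i < length L" "rtail N (L ! i) = rtail N (D ! j)"
    and later: "\<And>m. j < m \<Longrightarrow> m < length D \<Longrightarrow> rtail N (D ! m) \<notin> set (map (rtail N) L)"
    and C_def: "C = drop j D @ take i L" and gain: "walk_gain N C < 1"
  shows "sinkfree_aug t x (rtail N (D ! j)) (\<lambda>q. walk_flow N C q / (1 - walk_gain N C))"
proof (rule cycle_flow_sinkfree_aug)
  note L = lassoD[OF las(1)]
  have D': "set D \<subseteq> res_edges N s T t x" "rchain N D" "rhead N (last D) = w"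
    "distinct (map (rtail N) D)" "sink N \<notin> set (map (rtail N) D)"
    using D j unfolding sinkfree_rpath_def by auto
  show "C \<noteq> []" "rtail N (hd C) = rtail N (D ! j)"
    using j by (simp_all add: C_def hd_drop_conv_nth)
  show "set C \<subseteq> res_edges N s T t x" "sink N \<notin> set (map (rtail N) C)"
    using D'(1,5) L(2) las(2) set_drop_subset[of j D] set_take_subset[of i L]
    unfolding C_def by (auto simp: image_subset_iff)
  show "rchain N C"
    using j i(1) L(1,3,4) D'(2,3) unfolding C_def by (simp add: rchain_append rchain_drop rchain_take)
  show "rhead N (last C) = rtail N (D ! j)"
    using i L(1) rchain_nth_Suc[OF L(3), of "i - 1"] by (simp add: C_def last_take_conv_nth)
  show "walk_gain N C < 1"
    by (fact gain)
  have not_in: "rtail N (D ! m) \<notin> set (take i (map (rtail N) L))" if "j \<le> m" "m < length D" for m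
  proof (cases "m = j")
    case True
    then show ?thesis
      using distinct_nth_notin_set_take[OF L(5), of i] i by simp
  next
    case False
    then show ?thesis
      using later[of m] that set_take_subset[of i "map (rtail N) L"] by auto
  qed
  have "z \<notin> set (take i (map (rtail N) L))" if z: "z \<in> set (drop j (map (rtail N) D))" for z
  proof -
    obtain m where "m < length (drop j (map (rtail N) D))" "drop j (map (rtail N) D) ! m = z"
      using z unfolding in_set_conv_nth by blast
    then have "z = rtail N (D ! (j + m))" "j + m < length D"
      by auto
    then show ?thesis
      using not_in[of "j + m"] by simp
  qed
  moreover have "map (rtail N) C = drop j (map (rtail N) D) @ take i (map (rtail N) L)"
    unfolding C_def by (simp add: drop_map take_map)
  ultimately show "distinct (map (rtail N) C)"
    using D'(4) L(5) by (simp add: distinct_drop disjoint_iff)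
qed

lemma affine_fixpoint_cases:
  fixes A G S :: real
  assumes "0 \<le> A" "0 \<le> S" "0 \<le> G"
  shows "S \<le> A + G * S \<or> G < 1 \<and> A / (1 - G) \<le> A + G * S"
proof (cases "S \<le> A + G * S")
  case False
  then have less: "A < (1 - G) * S"
    by (simp add: algebra_simps)
  have "G < 1"
  proof (rule ccontr)
    assume "\<not> G < 1"
    then have "(1 - G) * S \<le> 0"
      using assms(2) by (intro mult_nonpos_nonneg) auto
    then show False
      using less assms(1) by linarith
  qed
  then have "A / (1 - G) \<le> S"
    using less by (simp add: divide_le_eq mult.commute)
  then have "G * (A / (1 - G)) \<le> G * S"
    using assms(3) by (rule mult_left_mono)
  moreover have "A / (1 - G) = A + G * (A / (1 - G))"
    using \<open>G < 1\<close> by (simp add: field_simps)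
  ultimately show ?thesis
    using \<open>G < 1\<close> by linarith
qed simp

lemma rpath_last_meet_lasso:
  assumes D: "sinkfree_rpath t x D u w" and las: "lasso t x L w k"
    and meet: "set (map (rtail N) D) \<inter> set (map (rtail N) L) \<noteq> {}"
  obtains j i where "j < length D" "0 < i" "i < length L" "rtail N (L ! i) = rtail N (D ! j)"
    "\<forall>m. j < m \<longrightarrow> m < length D \<longrightarrow> rtail N (D ! m) \<notin> set (map (rtail N) L)"
proof -
  define J where "J = {m. m < length D \<and> rtail N (D ! m) \<in> set (map (rtail N) L)}"
  obtain z where z: "z \<in> set (map (rtail N) D)" "z \<in> set (map (rtail N) L)"
    using meet by blast
  then obtain m where "m < length D" "rtail N (D ! m) \<in> set (map (rtail N) L)"
    unfolding in_set_conv_nth[of z "map (rtail N) D"] by auto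
  then have "J \<noteq> {}"
    unfolding J_def by blast
  define j where "j = Max J"
  have j: "j < length D" "rtail N (D ! j) \<in> set (map (rtail N) L)"
    and later: "\<And>m. j < m \<Longrightarrow> m < length D \<Longrightarrow> rtail N (D ! m) \<notin> set (map (rtail N) L)"
    using Max_in[of J] Max_ge[of J] \<open>J \<noteq> {}\<close> unfolding j_def J_def by fastforce+
  obtain i where i: "i < length L" "rtail N (L ! i) = rtail N (D ! j)"
    using j(2) by (auto simp: in_set_conv_nth)
  have "distinct (map (rtail N) D @ [w])"
    using D unfolding sinkfree_rpath_def by simp
  then have "i \<noteq> 0"
    using i lassoD(1,4)[OF las] j(1) by (auto simp: hd_conv_nth)
  then show thesis
    using that[OF j(1) _ i] later by simp
qed

text \<open>Skipping the cycle or running around it forever is never worse than running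
  around it once.\<close>

lemma skip_or_loop_cycle:
  assumes D: "sinkfree_rpath t x D u w" and j: "j < length D"
    and las: "lasso t x L w k" "sink N \<notin> set (map (rtail N) L)"
    and i: "0 < i" "i < length L" "rtail N (L ! i) = rtail N (D ! j)"
    and later: "\<And>m. j < m \<Longrightarrow> m < length D \<Longrightarrow> rtail N (D ! m) \<notin> set (map (rtail N) L)"
    and C_def: "C = drop j D @ take i L" and h: "sinkfree_aug t x (rtail N (D ! j)) h"
  obtains h' where "sinkfree_aug t x (rtail N (D ! j)) h'"
    "path_cost N B s T t x h' \<le> walk_cost N B C + walk_gain N C * path_cost N B s T t x h"
proof -
  have C: "set C \<subseteq> res_edges N s T t x"
    using D lassoD(2)[OF las(1)] set_drop_subset[of j D] set_take_subset[of i L]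
    unfolding C_def sinkfree_rpath_def by auto
  consider "path_cost N B s T t x h \<le> walk_cost N B C + walk_gain N C * path_cost N B s T t x h"
    | "walk_gain N C < 1"
      "walk_cost N B C / (1 - walk_gain N C) \<le> walk_cost N B C + walk_gain N C * path_cost N B s T t x h"
    using affine_fixpoint_cases[OF walk_cost_nonneg[OF C] _ less_imp_le[OF walk_gain_pos[OF C]]]
      h frac_aug_path_cost_nonneg unfolding sinkfree_aug_def by blast
  then show thesis
  proof cases
    case 1
    then show thesis
      using that h by blast
  next
    case 2
    have "sinkfree_aug t x (rtail N (D ! j)) (\<lambda>q. walk_flow N C q / (1 - walk_gain N C))"
      using cycle_through_lasso_sinkfree_aug[OF D j las i later C_def 2(1)] .
    then show thesis
      using that 2(2) by (simp add: path_cost_divide path_cost_walk_flow[OF C])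
  qed
qed

text \<open>Prepending the path D to the lasso flow h gives an augmenting path unless D meets
  the lasso. Otherwise cut D at its last vertex on the lasso: the remainder of D and
  the lasso stem up to that vertex form a cycle, which can be skipped or looped, and
  induction applies to the shorter initial part of D.\<close>

lemma height_le_rpath_sinkfree_aug:
  assumes "sinkfree_rpath t x D u w" "sinkfree_aug t x w h"
  shows "height N B s T t x u \<le> walk_cost N B D + walk_gain N D * path_cost N B s T t x h"
  using assms
proof (induction "length D" arbitrary: D w h rule: less_induct)
  case less
  obtain L k where h: "frac_aug_path N s T t x w h" "lasso t x L w k"
    "sink N \<notin> set (map (rtail N) L)" "{r. 0 < h r} = set L"
    using less.prems(2) unfolding sinkfree_aug_def by blast
  have D: "set D \<subseteq> res_edges N s T t x"
    using less.prems(1) unfolding sinkfree_rpath_def by auto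
  have "u \<noteq> sink N"
    using less.prems(1) unfolding sinkfree_rpath_def by (cases D) auto
  show ?case
  proof (cases "set (map (rtail N) D) \<inter> set (map (rtail N) L) = {}")
    case True
    then have "height N B s T t x u
        \<le> path_cost N B s T t x (\<lambda>q. walk_flow N D q + walk_gain N D * h q)"
      using sinkfree_aug_prepend[OF less.prems(1) h] sinkfree_aug_imp_aug_path
        height_le_path_cost[OF \<open>u \<noteq> sink N\<close>] by blast
    then show ?thesis
      unfolding path_cost_add_scaled path_cost_walk_flow[OF D] .
  next
    case False
    obtain j i where j: "j < length D" and i: "0 < i" "i < length L" "rtail N (L ! i) = rtail N (D ! j)"
      and later: "\<forall>m. j < m \<longrightarrow> m < length D \<longrightarrow> rtail N (D ! m) \<notin> set (map (rtail N) L)"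
      using rpath_last_meet_lasso[OF less.prems(1) h(2) False] by blast
    obtain h' where split: "h = (\<lambda>q. walk_flow N (take i L) q + walk_gain N (take i L) * h' q)"
      and "sinkfree_aug t x (rtail N (D ! j)) h'"
      using sinkfree_aug_peel_prefix[OF h i(2)] i(3) by auto
    with skip_or_loop_cycle[OF less.prems(1) j h(2,3) i later[rule_format] refl]
    obtain h'' where h'': "sinkfree_aug t x (rtail N (D ! j)) h''"
      "path_cost N B s T t x h'' \<le> walk_cost N B (drop j D @ take i L)
         + walk_gain N (drop j D @ take i L) * path_cost N B s T t x h'"
      by blast
    have "set (take i L) \<subseteq> res_edges N s T t x" "set (take j D) \<subseteq> res_edges N s T t x"
      using lassoD(2)[OF h(2)] D set_take_subset[of i L] set_take_subset[of j D] by blast+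
    moreover have "sinkfree_rpath t x (take j D) u (rtail N (D ! j))"
      using sinkfree_rpath_take[OF less.prems(1) j] .
    ultimately have "height N B s T t x u
        \<le> walk_cost N B (take j D) + walk_gain N (take j D) * path_cost N B s T t x h''"
      using less.hyps[OF _ _ h''(1)] j by simp
    also have "\<dots> \<le> walk_cost N B (take j D) + walk_gain N (take j D) *
        (walk_cost N B (drop j D @ take i L) + walk_gain N (drop j D @ take i L) * path_cost N B s T t x h')"
      using h''(2) walk_gain_pos[OF \<open>set (take j D) \<subseteq> _\<close>] by simp
    also have "\<dots> = walk_cost N B D + walk_gain N D * path_cost N B s T t x h"
      unfolding split path_cost_add_scaled path_cost_walk_flow[OF \<open>set (take i L) \<subseteq> _\<close>]
      by (rule walk_cost_regroup[symmetric])
    finally show ?thesis .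
  qed
qed

lemma height_sink [simp]: "height N B s T t x (sink N) = 0"
  by (simp add: height_def)

lemma height_le_edge_aug_path:
  assumes r: "r \<in> res_edges N s T t x" "rtail N r \<noteq> sink N" "rhead N r \<noteq> sink N"
    and f: "aug_path N s T t x (rhead N r) f"
  shows "height N B s T t x (rtail N r) \<le> rcost N B r + rgain N r * path_cost N B s T t x f"
proof -
  have path: "sinkfree_rpath t x [r] (rtail N r) (rhead N r)"
    unfolding sinkfree_rpath_def using r res_edgesD(5)[OF r(1)] by auto
  obtain f' where f': "sinkfree_aug t x (rhead N r) f'"
    "path_cost N B s T t x f' \<le> path_cost N B s T t x f"
    using cheaper_sinkfree_aug[OF r(3)] f unfolding aug_path_iff_lasso_aug by blast
  have "height N B s T t x (rtail N r) \<le> walk_cost N B [r] + walk_gain N [r] * path_cost N B s T t x f'"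
    by (rule height_le_rpath_sinkfree_aug[OF path f'(1)])
  also have "\<dots> \<le> rcost N B r + rgain N r * path_cost N B s T t x f"
    using f'(2) res_edgesD(3)[OF r(1)] by simp
  finally show ?thesis .
qed

lemma height_bellman:
  assumes r: "r \<in> res_edges N s T t x"
  shows "height N B s T t x (rtail N r) \<le> rcost N B r + rgain N r * height N B s T t x (rhead N r)"
proof -
  have wV: "rhead N r \<in> verts_at N s T t" and g: "0 < rgain N r" and c: "0 \<le> rcost N B r"
    using res_edgesD[OF r] by auto
  consider "rtail N r = sink N" | "rtail N r \<noteq> sink N" "rhead N r = sink N"
    | "rtail N r \<noteq> sink N" "rhead N r \<noteq> sink N"
    by blast
  then show ?thesis
  proof cases
    case 1
    then show ?thesis
      using height_nonneg[OF wV] g c by simp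
  next
    case 2
    then have "sinkfree_aug t x (rtail N r) (walk_flow N [r])"
      using r by (intro walk_flow_sinkfree_aug) auto
    then have "height N B s T t x (rtail N r) \<le> path_cost N B s T t x (walk_flow N [r])"
      by (rule height_le_path_cost[OF 2(1) sinkfree_aug_imp_aug_path])
    also have "\<dots> = rcost N B r"
      using r path_cost_walk_flow[of "[r]" t x] by simp
    finally show ?thesis
      using 2 by simp
  next
    case 3
    have "(height N B s T t x (rtail N r) - rcost N B r) / rgain N r \<le> height N B s T t x (rhead N r)"
    proof (rule le_height[OF wV 3(2)])
      fix f
      assume "aug_path N s T t x (rhead N r) f"
      then have "height N B s T t x (rtail N r) \<le> rcost N B r + rgain N r * path_cost N B s T t x f"
        by (rule height_le_edge_aug_path[OF r 3])
      then show "(height N B s T t x (rtail N r) - rcost N B r) / rgain N r \<le> path_cost N B s T t x f"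
        using g by (simp add: divide_le_eq mult.commute)
    qed
    then show ?thesis
      using g by (simp add: divide_le_eq mult.commute)
  qed
qed

section \<open>Feasible potentials and monotonicity of heights\<close>

definition feasible_potential :: "nat \<Rightarrow> 'v flow \<Rightarrow> ('v \<Rightarrow> real) \<Rightarrow> bool" where
  "feasible_potential t x \<pi> \<longleftrightarrow> \<pi> (sink N) = 0 \<and>
     (\<forall>r\<in>res_edges N s T t x. \<pi> (rtail N r) \<le> rcost N B r + rgain N r * \<pi> (rhead N r))"

lemma height_feasible_potential: "feasible_potential t x (height N B s T t x)"
  unfolding feasible_potential_def using height_bellman by (simp add: height_def)

lemma potential_telescope:
  assumes "frac_aug_path N s T t x a f" "a \<in> verts_at N s T t" "a \<noteq> sink N" "\<pi> (sink N) = 0"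
  shows "(\<Sum>r\<in>res_edges N s T t x. f r * (\<pi> (rtail N r) - rgain N r * \<pi> (rhead N r))) = \<pi> a"
proof -
  let ?R = "res_edges N s T t x" and ?V = "verts_at N s T t"
  have tV: "rtail N ` ?R \<subseteq> ?V" and hV: "rhead N ` ?R \<subseteq> ?V"
    using res_edgesD by auto
  have "(\<Sum>r\<in>?R. f r * \<pi> (rtail N r)) = (\<Sum>v\<in>?V. \<pi> v * (\<Sum>r\<in>{r \<in> ?R. rtail N r = v}. f r))"
    by (subst sum.group[symmetric, OF finite_res_edges finite_verts_at tV])
      (auto simp: sum_distrib_left mult.commute intro!: sum.cong)
  moreover have "(\<Sum>r\<in>?R. f r * (rgain N r * \<pi> (rhead N r))) =
      (\<Sum>v\<in>?V. \<pi> v * (\<Sum>r\<in>{r \<in> ?R. rhead N r = v}. rgain N r * f r))"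
    by (subst sum.group[symmetric, OF finite_res_edges finite_verts_at hV])
      (auto simp: sum_distrib_left mult.commute mult.left_commute intro!: sum.cong)
  ultimately have "(\<Sum>r\<in>?R. f r * (\<pi> (rtail N r) - rgain N r * \<pi> (rhead N r)))
      = (\<Sum>v\<in>?V. \<pi> v * excess t x f v)"
    unfolding excess_def by (simp add: right_diff_distrib sum_subtractf)
  also have "\<dots> = (\<Sum>v\<in>?V - {sink N}. \<pi> v * excess t x f v)"
    using sum.remove[OF finite_verts_at sink_in_verts_at, of "\<lambda>v. \<pi> v * excess t x f v"] assms(4)
    by simp
  also have "\<dots> = (\<Sum>v\<in>?V - {sink N}. \<pi> v * (if v = a then 1 else 0))"
    using assms(1) unfolding frac_aug_path_iff by (intro sum.cong) auto
  also have "\<dots> = \<pi> a"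
    using assms(2,3) finite_verts_at by (simp add: if_distrib cong: if_cong)
  finally show ?thesis .
qed

lemma path_cost_minus_potential:
  assumes "frac_aug_path N s T t x a f" "a \<in> verts_at N s T t" "a \<noteq> sink N" "\<pi> (sink N) = 0"
  shows "path_cost N B s T t x f - \<pi> a =
    (\<Sum>r\<in>res_edges N s T t x. f r * (rcost N B r + rgain N r * \<pi> (rhead N r) - \<pi> (rtail N r)))"
  using potential_telescope[where \<pi> = \<pi>, OF assms]
  unfolding path_cost_def by (simp add: algebra_simps sum_subtractf sum.distrib)

lemma feasible_potential_le_height:
  assumes "feasible_potential t x \<pi>" "v \<in> verts_at N s T t"
  shows "\<pi> v \<le> height N B s T t x v"
proof (cases "v = sink N")
  case False
  show ?thesis
  proof (rule le_height[OF assms(2) False])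
    fix f
    assume "aug_path N s T t x v f"
    then have f: "frac_aug_path N s T t x v f"
      unfolding aug_path_def by simp
    have "0 \<le> (\<Sum>r\<in>res_edges N s T t x. f r * (rcost N B r + rgain N r * \<pi> (rhead N r) - \<pi> (rtail N r)))"
      using assms(1) frac_aug_path_nonneg[OF f] unfolding feasible_potential_def
      by (intro sum_nonneg mult_nonneg_nonneg) auto
    then show "\<pi> v \<le> path_cost N B s T t x f"
      using path_cost_minus_potential[where \<pi> = \<pi>, OF f assms(2) False] assms(1)
      unfolding feasible_potential_def by simp
  qed
qed (use assms in \<open>simp add: feasible_potential_def height_def\<close>)

lemma cheapest_tight:
  assumes ch: "cheapest N B s T t x a f" and a: "a \<in> verts_at N s T t" "a \<noteq> sink N"
    and r: "r \<in> res_edges N s T t x" "0 < f r"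
  shows "height N B s T t x (rtail N r) =
    rcost N B r + rgain N r * height N B s T t x (rhead N r)"
proof -
  let ?\<pi> = "height N B s T t x"
  let ?slack = "\<lambda>r. f r * (rcost N B r + rgain N r * ?\<pi> (rhead N r) - ?\<pi> (rtail N r))"
  have f: "aug_path N s T t x a f" "frac_aug_path N s T t x a f"
    using ch unfolding cheapest_def aug_path_def by auto
  have "path_cost N B s T t x f = ?\<pi> a"
  proof (rule antisym)
    show "path_cost N B s T t x f \<le> ?\<pi> a"
      using ch unfolding cheapest_def by (intro le_height[OF a]) auto
    show "?\<pi> a \<le> path_cost N B s T t x f"
      by (rule height_le_path_cost[OF a(2) f(1)])
  qed
  then have "(\<Sum>r\<in>res_edges N s T t x. ?slack r) = 0"
    using path_cost_minus_potential[where \<pi> = ?\<pi>, OF f(2) a] by simp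
  moreover have "0 \<le> ?slack r" if "r \<in> res_edges N s T t x" for r
    using height_bellman[OF that] frac_aug_path_nonneg[OF f(2)] by simp
  ultimately have "\<forall>r\<in>res_edges N s T t x. ?slack r = 0"
    using sum_nonneg_eq_0_iff[OF finite_res_edges, where f = ?slack] by blast
  then have "?slack r = 0"
    using r(1) by blast
  then show ?thesis
    using r(2) by simp
qed

text \<open>A residual edge and its reverse have inverse gains, and one of them has cost 0
  while the other has a nonnegative cost; so tightness of one implies feasibility of
  the other.\<close>

lemma reverse_tight_imp_feasible:
  assumes "e \<in> edges_at N s T t"
    and "\<pi> (rtail N (e, \<not> b)) = rcost N B (e, \<not> b) + rgain N (e, \<not> b) * \<pi> (rhead N (e, \<not> b))"
  shows "\<pi> (rtail N (e, b)) \<le> rcost N B (e, b) + rgain N (e, b) * \<pi> (rhead N (e, b))"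
  using assms edges_atD(3,4)[OF assms(1)]
  by (cases b) (auto simp: rtail_def rhead_def rcost_def rgain_def field_simps)

lemma augment_new_res_edge:
  assumes r: "r \<in> res_edges N s T t (augment N x f \<theta>)" "r \<notin> res_edges N s T t x"
    and f: "\<And>q. 0 \<le> f q" "\<And>q. f q \<noteq> 0 \<Longrightarrow> q \<in> res_edges N s T t x" and "0 < \<theta>"
  shows "(fst r, \<not> snd r) \<in> res_edges N s T t x \<and> 0 < f (fst r, \<not> snd r)"
proof -
  obtain e b where rb: "r = (e, b)"
    by force
  have e: "e \<in> edges_at N s T t" "0 < gainE N e"
    using r(1) edges_atD(3) unfolding rb res_edges_def by auto
  have x': "augment N x f \<theta> e = x e + \<theta> * f (e, True) - \<theta> * f (e, False) / gainE N e"
    unfolding augment_def ..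
  have "0 < f (e, \<not> b)"
  proof (cases b)
    case True
    then have "augment N x f \<theta> e < x e"
      using r e unfolding rb res_edges_def below_cap_def by (auto split: sum.splits)
    moreover have "0 \<le> \<theta> * f (e, True)"
      using f(1) \<open>0 < \<theta>\<close> by simp
    ultimately have "0 < \<theta> * f (e, False) / gainE N e"
      unfolding x' by linarith
    then show ?thesis
      using True \<open>0 < \<theta>\<close> e(2) by (simp add: zero_less_divide_iff zero_less_mult_iff)
  next
    case False
    then have "x e < augment N x f \<theta> e"
      using r e unfolding rb res_edges_def by auto
    moreover have "0 \<le> \<theta> * f (e, False) / gainE N e"
      using f(1) \<open>0 < \<theta>\<close> e(2) by simp
    ultimately have "0 < \<theta> * f (e, True)"
      unfolding x' by linarith
    then show ?thesis
      using False \<open>0 < \<theta>\<close> by (simp add: zero_less_mult_iff)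
  qed
  then show ?thesis
    using f(2) rb by force
qed

lemma feasible_potential_augment:
  assumes feas: "feasible_potential t x \<pi>"
    and f: "\<And>q. 0 \<le> f q" "\<And>q. f q \<noteq> 0 \<Longrightarrow> q \<in> res_edges N s T t x" and "0 < \<theta>"
    and tight: "\<And>r. r \<in> res_edges N s T t x \<Longrightarrow> 0 < f r \<Longrightarrow>
      \<pi> (rtail N r) = rcost N B r + rgain N r * \<pi> (rhead N r)"
  shows "feasible_potential t (augment N x f \<theta>) \<pi>"
  unfolding feasible_potential_def
proof (intro conjI ballI)
  show "\<pi> (sink N) = 0"
    using feas unfolding feasible_potential_def by simp
  fix r
  assume r: "r \<in> res_edges N s T t (augment N x f \<theta>)"
  obtain e b where rb: "r = (e, b)"
    by force
  have "e \<in> edges_at N s T t"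
    using r unfolding rb res_edges_def by auto
  show "\<pi> (rtail N r) \<le> rcost N B r + rgain N r * \<pi> (rhead N r)"
  proof (cases "r \<in> res_edges N s T t x")
    case True
    then show ?thesis
      using feas unfolding feasible_potential_def by blast
  next
    case False
    then have "(e, \<not> b) \<in> res_edges N s T t x" "0 < f (e, \<not> b)"
      using augment_new_res_edge[OF r False f \<open>0 < \<theta>\<close>] rb by auto
    then show ?thesis
      using reverse_tight_imp_feasible[OF \<open>e \<in> edges_at N s T t\<close> tight] rb by simp
  qed
qed

lemma alg_step_height_mono:
  assumes step: "alg_step N B s T t x x'" and t: "t \<in> {1..T}" and v: "v \<in> verts_at N s T t"
  shows "height N B s T t x v \<le> height N B s T t x' v"
proof -
  obtain f \<theta> where ch: "cheapest N B s T t x (s t) f" and "0 < \<theta>" and x': "x' = augment N x f \<theta>"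
    using step unfolding alg_step_def by blast
  then have "frac_aug_path N s T t x (s t) f"
    unfolding cheapest_def aug_path_def by simp
  then have "feasible_potential t x' (height N B s T t x)"
    unfolding x'
    using height_feasible_potential cheapest_tight[OF ch source_in_verts_at[OF t]] \<open>0 < \<theta>\<close>
    by (intro feasible_potential_augment) (auto dest: frac_aug_path_nonneg frac_aug_path_support)
  then show ?thesis
    using feasible_potential_le_height v by blast
qed

lemma alg_steps_height_mono:
  assumes "(alg_step N B s T t)\<^sup>*\<^sup>* x x'" "t \<in> {1..T}" "v \<in> verts_at N s T t"
  shows "height N B s T t x v \<le> height N B s T t x' v"
  using assms(1)
proof (induction rule: rtranclp_induct)
  case (step y z)
  then show ?case
    using alg_step_height_mono[OF step(2) assms(2,3)] by linarith
qed simp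

text \<open>The edges present at time t but not at time t - 1 all leave the new source, so
  extending the old heights by 0 keeps the potential feasible.\<close>

lemma arrival_feasible_potential:
  fixes y :: "'v flow"
  assumes "t \<in> {1..T}"
  defines "\<pi> \<equiv> \<lambda>v. if v \<in> verts_at N s T (t - 1) then height N B s T (t - 1) y v else 0"
  shows "feasible_potential t (restrict_flow N s T (t - 1) y) \<pi>"
  unfolding feasible_potential_def
proof (intro conjI ballI)
  show "\<pi> (sink N) = 0"
    by (simp add: \<pi>_def)
  fix r
  assume r: "r \<in> res_edges N s T t (restrict_flow N s T (t - 1) y)"
  obtain e b where rb: "r = (e, b)"
    by force
  show "\<pi> (rtail N r) \<le> rcost N B r + rgain N r * \<pi> (rhead N r)"
  proof (cases "e \<in> edges_at N s T (t - 1)")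
    case True
    then have "r \<in> res_edges N s T (t - 1) y"
      using r unfolding rb res_edges_def restrict_flow_def below_cap_def by (auto split: sum.splits)
    then show ?thesis
      using height_bellman res_edgesD(1,2) unfolding \<pi>_def by simp
  next
    case False
    have "e \<in> edges_at N s T t"
      using r unfolding rb res_edges_def by auto
    with False have "tailE e \<notin> verts_at N s T (t - 1)"
      unfolding edges_at_def tailE_def by auto
    moreover have "b"
      using r False unfolding rb res_edges_def restrict_flow_def by auto
    moreover have "0 \<le> \<pi> v" for v
      unfolding \<pi>_def using height_nonneg by simp
    ultimately show ?thesis
      using res_edgesD(3,4)[OF r] unfolding rb by (simp add: \<pi>_def rtail_def)
  qed
qed

lemma arrival_height_mono:
  assumes "t \<in> {1..T}" "v \<in> verts_at N s T (t - 1)"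
  shows "height N B s T (t - 1) y v \<le> height N B s T t (restrict_flow N s T (t - 1) y) v"
  using feasible_potential_le_height[OF arrival_feasible_potential[OF assms(1)]]
    verts_at_mono[of "t - 1" t] assms(2) by fastforce

end

theorem lemma2:
  fixes N :: "'v gnet" and s :: "nat \<Rightarrow> 'v" and T :: nat
  assumes "gnf_instance N s T"
  shows "\<exists>B0::real. \<forall>B\<ge>B0. \<forall>xs. alg_run N B s T xs \<longrightarrow>
           (\<forall>t\<in>{1..T}. \<forall>v\<in>verts_at N s T (t - 1).
              height N B s T (t - 1) (xs (t - 1)) v \<le> height N B s T t (xs t) v)"
proof (intro exI[of _ 0] allI impI ballI)
  \<comment> \<open>B0 = 0 suffices: the argument only needs all residual costs to be nonnegative.\<close>
  fix B :: real and xs t v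
  assume "0 \<le> B" and run: "alg_run N B s T xs" and t: "t \<in> {1..T}"
    and v: "v \<in> verts_at N s T (t - 1)"
  interpret online_gnf N s T B
    using assms \<open>0 \<le> B\<close> by unfold_locales
  have "(alg_step N B s T t)\<^sup>*\<^sup>* (restrict_flow N s T (t - 1) (xs (t - 1))) (xs t)"
    using run t unfolding alg_run_def alg_phase_def by blast
  moreover have "v \<in> verts_at N s T t"
    using v verts_at_mono[of "t - 1" t] by auto
  ultimately have "height N B s T t (restrict_flow N s T (t - 1) (xs (t - 1))) v
      \<le> height N B s T t (xs t) v"
    using alg_steps_height_mono t by blast
  then show "height N B s T (t - 1) (xs (t - 1)) v \<le> height N B s T t (xs t) v"
    using arrival_height_mono[OF t v, of "xs (t - 1)"] by linarith
qed

end
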